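(* Let $k$ be a field, $Q,q\in k^\times$, $d\ge1$, and let $n=2r+1$ with $r\geq d$. Then the category $\mathcal P^d_{Q,q}$ is equivalent to the category of finite-dimensional modules over the algebra $S^B_{Q,q}(n;d)=\mathrm{End}_{\mathcal H^B_{Q,q}(d)}(V_n^{\otimes d})$.
   Context: $\mathcal H^B_{Q,q}(d)$ is the algebra generated by $T_0,\dots,T_{d-1}$ with relations $(T_0+Q)(T_0-Q^{-1})=0$; $(T_i+q)(T_i-q^{-1})=0$ ($i>0$); $T_iT_{i+1}T_i=T_{i+1}T_iT_{i+1}$ ($i>0$); $T_0T_1T_0T_1=T_1T_0T_1T_0$; $T_iT_j=T_jT_i$ ($|i-j|>1$). For $m=2s$ let $\mathbb I_m=\{-\tfrac{2s-1}{2},\dots,-\tfrac12,\tfrac12,\dots,\tfrac{2s-1}{2}\}$ and for $m=2s+1$ let $\mathbb I_m=\{-s,\dots,s\}$; $V_m$ has basis $\{v_i:i\in\mathbb I_m\}$. $R_q(v_i\otimes v_j)=q^{-1}v_i\otimes v_j$ if $i=j$, $v_j\otimes v_i$ if $i<j$, $v_j\otimes v_i+(q^{-1}-q)v_i\otimes v_j$ if $i>j$; $K_Q(v_i)=Q^{-1}v_i$ if $i=0$, $v_{-i}$ if $i>0$, $v_{-i}+(Q^{-1}-Q)v_i$ if $i<0$. The algebra acts on $V_m^{\otimes d}$ from the right: $T_i$ ($i>0$) by $R_q$ on factors $i,i+1$, $T_0$ by $K_Q$ on the first factor. $\mathcal C^B_d$ is the $k$-linear category with objects $V_m$ ($m\ge1$)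 and $\mathrm{Hom}_{\mathcal C^B_d}(V_m,V_{m'})=\mathrm{Hom}_{\mathcal H^B_{Q,q}(d)}(V_m^{\otimes d},V_{m'}^{\otimes d})$, composition being composition of maps. $\mathcal P^d_{Q,q}$ is the category of $k$-linear functors from $\mathcal C^B_d$ to the category of finite-dimensional $k$-vector spaces, with natural transformations as morphisms. *)

theory Defs
  imports Main
begin

record ('o, 'a) category =
  obj  :: "'o set"
  hom  :: "'o \<Rightarrow> 'o \<Rightarrow> 'a set"
  comp :: "'o \<Rightarrow> 'o \<Rightarrow> 'o \<Rightarrow> 'a \<Rightarrow> 'a \<Rightarrow> 'a"  (* comp a b c g f = g o f for f : a -> b, g : b -> c *)
  idn  :: "'o \<Rightarrow> 'a"

definition is_functor ::
  "('o, 'a) category \<Rightarrow> ('p, 'b) category \<Rightarrow> ('o \<Rightarrow> 'p) \<Rightarrow> ('o \<Rightarrow> 'o \<Rightarrow> 'a \<Rightarrow> 'b) \<Rightarrow> bool" where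
  "is_functor C D Fo Fa \<longleftrightarrow>
     (\<forall>a\<in>obj C. Fo a \<in> obj D) \<and>
     (\<forall>a\<in>obj C. \<forall>b\<in>obj C. \<forall>f\<in>hom C a b. Fa a b f \<in> hom D (Fo a) (Fo b)) \<and>
     (\<forall>a\<in>obj C. \<forall>b\<in>obj C. \<forall>c\<in>obj C. \<forall>f\<in>hom C a b. \<forall>g\<in>hom C b c.
        Fa a c (comp C a b c g f) = comp D (Fo a) (Fo b) (Fo c) (Fa b c g) (Fa a b f)) \<and>
     (\<forall>a\<in>obj C. Fa a a (idn C a) = idn D (Fo a))"

definition is_iso :: "('p, 'b) category \<Rightarrow> 'p \<Rightarrow> 'p \<Rightarrow> 'b \<Rightarrow> bool" where
  "is_iso D x y u \<longleftrightarrow> u \<in> hom D x y \<and>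
     (\<exists>v\<in>hom D y x. comp D x y x v u = idn D x \<and> comp D y x y u v = idn D y)"

definition is_nat_iso ::
  "('o, 'a) category \<Rightarrow> ('p, 'b) category \<Rightarrow> ('o \<Rightarrow> 'p) \<Rightarrow> ('o \<Rightarrow> 'o \<Rightarrow> 'a \<Rightarrow> 'b)
     \<Rightarrow> ('o \<Rightarrow> 'p) \<Rightarrow> ('o \<Rightarrow> 'o \<Rightarrow> 'a \<Rightarrow> 'b) \<Rightarrow> ('o \<Rightarrow> 'b) \<Rightarrow> bool" where
  "is_nat_iso C D Fo Fa Go Ga eta \<longleftrightarrow>
     (\<forall>a\<in>obj C. is_iso D (Fo a) (Go a) (eta a)) \<and>
     (\<forall>a\<in>obj C. \<forall>b\<in>obj C. \<forall>f\<in>hom C a b.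
        comp D (Fo a) (Fo b) (Go b) (eta b) (Fa a b f) = comp D (Fo a) (Go a) (Go b) (Ga a b f) (eta a))"

definition cat_equivalent :: "('o, 'a) category \<Rightarrow> ('p, 'b) category \<Rightarrow> bool" where
  "cat_equivalent C D \<longleftrightarrow>
     (\<exists>Fo Fa Go Ga eta eps.
        is_functor C D Fo Fa \<and> is_functor D C Go Ga \<and>
        is_nat_iso C C (\<lambda>a. Go (Fo a)) (\<lambda>a b f. Ga (Fo a) (Fo b) (Fa a b f))
                       (\<lambda>a. a) (\<lambda>a b f. f) eta \<and>
        is_nat_iso D D (\<lambda>x. Fo (Go x)) (\<lambda>x y g. Fa (Go x) (Go y) (Ga x y g))
                       (\<lambda>x. x) (\<lambda>x y g. g) eps)"

(* matrices indexed by naturals (finite-dimensional vector spaces k^n) *)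
type_synonym 'k nmat = "nat \<Rightarrow> nat \<Rightarrow> 'k"

definition nmul :: "'k::field nmat \<Rightarrow> nat \<Rightarrow> 'k nmat \<Rightarrow> 'k nmat" where
  "nmul A n B = (\<lambda>i j. \<Sum>l<n. A i l * B l j)"

definition nid :: "nat \<Rightarrow> 'k::field nmat" where
  "nid n = (\<lambda>i j. if i = j \<and> i < n then 1 else 0)"

definition nmat_in :: "nat \<Rightarrow> nat \<Rightarrow> 'k::field nmat \<Rightarrow> bool" where
  "nmat_in r c A \<longleftrightarrow> (\<forall>i j. A i j \<noteq> 0 \<longrightarrow> i < r \<and> j < c)"

(* matrices indexed by tuples of (doubled) indices: linear maps between tensor powers *)
type_synonym 'k tmat = "int list \<Rightarrow> int list \<Rightarrow> 'k"

text \<open>The index set I_m, with every index doubled so that it becomes an integer: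
  i in I_m is represented by 2i.  For m = 2s this gives the odd integers in [-(2s-1), 2s-1],
  for m = 2s+1 the even integers in [-2s, 2s].  Order, sign and the value 0 are preserved.\<close>

definition idx :: "nat \<Rightarrow> int set" where
  "idx m = {j. \<bar>j\<bar> \<le> int m - 1 \<and> even (j + int m - 1)}"

(* basis of V_m^{\<otimes>d}: tuples (lists) of length d *)
definition tup :: "nat \<Rightarrow> nat \<Rightarrow> int list set" where
  "tup d m = {xs. length xs = d \<and> set xs \<subseteq> idx m}"

definition tmul :: "nat \<Rightarrow> nat \<Rightarrow> 'k::field tmat \<Rightarrow> 'k tmat \<Rightarrow> 'k tmat" where
  "tmul d m A B = (\<lambda>x z. \<Sum>y\<in>tup d m. A x y * B y z)"

definition tid :: "nat \<Rightarrow> nat \<Rightarrow> 'k::field tmat" where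
  "tid d m = (\<lambda>x y. if x = y \<and> x \<in> tup d m then 1 else 0)"

(* R_q : matrix entry = coefficient of v_a (x) v_b in R_q(v_i (x) v_j) *)
definition Rq :: "'k::field \<Rightarrow> int \<Rightarrow> int \<Rightarrow> int \<Rightarrow> int \<Rightarrow> 'k" where
  "Rq q a b i j =
     (if i = j then (if a = i \<and> b = j then inverse q else 0)
      else if i < j then (if a = j \<and> b = i then 1 else 0)
      else (if a = j \<and> b = i then 1 else 0) + (if a = i \<and> b = j then inverse q - q else 0))"

(* K_Q : matrix entry = coefficient of v_a in K_Q(v_i) *)
definition KQ :: "'k::field \<Rightarrow> int \<Rightarrow> int \<Rightarrow> 'k" where
  "KQ Q a i =
     (if i = 0 then (if a = 0 then inverse Q else 0)
      else if i > 0 then (if a = - i then 1 else 0)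
      else (if a = - i then 1 else 0) + (if a = i then inverse Q - Q else 0))"

text \<open>Action of the generator T_i on V_m^{\<otimes>d}: entry (y, x) is the coefficient of the basis
  tensor y in the image of the basis tensor x.  T_0 acts by K_Q on the first factor,
  T_i (i > 0) by R_q on the factors i, i+1 (list positions i-1, i).\<close>

definition Tgen :: "nat \<Rightarrow> 'k::field \<Rightarrow> 'k \<Rightarrow> nat \<Rightarrow> nat \<Rightarrow> 'k tmat" where
  "Tgen d Q q m i = (\<lambda>y x.
     if y \<in> tup d m \<and> x \<in> tup d m then
       (if i = 0 then (if tl y = tl x then KQ Q (hd y) (hd x) else 0)
        else (if (\<forall>p<d. p \<noteq> i - 1 \<and> p \<noteq> i \<longrightarrow> y ! p = x ! p)
              then Rq q (y ! (i - 1)) (y ! i) (x ! (i - 1)) (x ! i) else 0))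
     else 0)"

text \<open>Hom_{H^B_{Q,q}(d)}(V_m^{\<otimes>d}, V_{m'}^{\<otimes>d}): linear maps (matrices supported on
  tup d m' x tup d m) commuting with the action of all generators T_0, ..., T_{d-1}.\<close>

definition CHom :: "nat \<Rightarrow> 'k::field \<Rightarrow> 'k \<Rightarrow> nat \<Rightarrow> nat \<Rightarrow> 'k tmat set" where
  "CHom d Q q m m' = {f.
     (\<forall>x y. f x y \<noteq> 0 \<longrightarrow> x \<in> tup d m' \<and> y \<in> tup d m) \<and>
     (\<forall>i<d. tmul d m f (Tgen d Q q m i) = tmul d m' (Tgen d Q q m' i) f)}"

text \<open>A k-linear functor F : C^B_d -> (finite-dimensional k-vector spaces), with F(V_m) = k^(D m)
  and F on morphisms given by matrices Fm m m' f.\<close>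

type_synonym 'k Pobj = "(nat \<Rightarrow> nat) \<times> (nat \<Rightarrow> nat \<Rightarrow> 'k tmat \<Rightarrow> 'k nmat)"

definition is_linfunctor :: "nat \<Rightarrow> 'k::field \<Rightarrow> 'k \<Rightarrow> 'k Pobj \<Rightarrow> bool" where
  "is_linfunctor d Q q X \<longleftrightarrow> (case X of (D, Fm) \<Rightarrow>
     (\<forall>m m'. 1 \<le> m \<longrightarrow> 1 \<le> m' \<longrightarrow> (\<forall>f\<in>CHom d Q q m m'. nmat_in (D m') (D m) (Fm m m' f))) \<and>
     (\<forall>m m'. 1 \<le> m \<longrightarrow> 1 \<le> m' \<longrightarrow> (\<forall>f\<in>CHom d Q q m m'. \<forall>g\<in>CHom d Q q m m'. \<forall>c.
        Fm m m' (\<lambda>x y. f x y + g x y) = (\<lambda>i j. Fm m m' f i j + Fm m m' g i j) \<and>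
        Fm m m' (\<lambda>x y. c * f x y) = (\<lambda>i j. c * Fm m m' f i j))) \<and>
     (\<forall>m m' m''. 1 \<le> m \<longrightarrow> 1 \<le> m' \<longrightarrow> 1 \<le> m'' \<longrightarrow>
        (\<forall>f\<in>CHom d Q q m m'. \<forall>g\<in>CHom d Q q m' m''.
           Fm m m'' (tmul d m' g f) = nmul (Fm m' m'' g) (D m') (Fm m m' f))) \<and>
     (\<forall>m. 1 \<le> m \<longrightarrow> Fm m m (tid d m) = nid (D m)))"

(* natural transformations F => G; components extensional (zero at the non-object 0) *)
definition is_nattrans :: "nat \<Rightarrow> 'k::field \<Rightarrow> 'k \<Rightarrow> 'k Pobj \<Rightarrow> 'k Pobj \<Rightarrow> (nat \<Rightarrow> 'k nmat) \<Rightarrow> bool" where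
  "is_nattrans d Q q X Y eta \<longleftrightarrow> (case X of (D, Fm) \<Rightarrow> case Y of (D', Gm) \<Rightarrow>
     (\<forall>m. 1 \<le> m \<longrightarrow> nmat_in (D' m) (D m) (eta m)) \<and> eta 0 = (\<lambda>i j. 0) \<and>
     (\<forall>m m'. 1 \<le> m \<longrightarrow> 1 \<le> m' \<longrightarrow> (\<forall>f\<in>CHom d Q q m m'.
        nmul (eta m') (D m') (Fm m m' f) = nmul (Gm m m' f) (D' m) (eta m))))"

definition Pcat :: "nat \<Rightarrow> 'k::field \<Rightarrow> 'k \<Rightarrow> ('k Pobj, nat \<Rightarrow> 'k nmat) category" where
  "Pcat d Q q = \<lparr>
     obj = {X. is_linfunctor d Q q X},
     hom = (\<lambda>X Y. {eta. is_nattrans d Q q X Y eta}),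
     comp = (\<lambda>X Y Z th eta. \<lambda>m. nmul (th m) (fst Y m) (eta m)),
     idn = (\<lambda>X. \<lambda>m. if 1 \<le> m then nid (fst X m) else (\<lambda>i j. 0)) \<rparr>"

text \<open>A finite-dimensional left S-module: k^N together with a k-algebra homomorphism
  rho : S -> M_N(k); multiplication in S is composition.\<close>

type_synonym 'k Mobj = "nat \<times> ('k tmat \<Rightarrow> 'k nmat)"

definition is_Smodule :: "nat \<Rightarrow> 'k::field \<Rightarrow> 'k \<Rightarrow> nat \<Rightarrow> 'k Mobj \<Rightarrow> bool" where
  "is_Smodule d Q q n M \<longleftrightarrow> (case M of (N, rho) \<Rightarrow>
     (\<forall>a\<in>CHom d Q q n n. nmat_in N N (rho a)) \<and>
     (\<forall>a\<in>CHom d Q q n n. \<forall>b\<in>CHom d Q q n n. \<forall>c.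
        rho (\<lambda>x y. a x y + b x y) = (\<lambda>i j. rho a i j + rho b i j) \<and>
        rho (\<lambda>x y. c * a x y) = (\<lambda>i j. c * rho a i j) \<and>
        rho (tmul d n a b) = nmul (rho a) N (rho b)) \<and>
     rho (tid d n) = nid N)"

definition is_Smodhom :: "nat \<Rightarrow> 'k::field \<Rightarrow> 'k \<Rightarrow> nat \<Rightarrow> 'k Mobj \<Rightarrow> 'k Mobj \<Rightarrow> 'k nmat \<Rightarrow> bool" where
  "is_Smodhom d Q q n M M' phi \<longleftrightarrow> (case M of (N, rho) \<Rightarrow> case M' of (N', rho') \<Rightarrow>
     nmat_in N' N phi \<and>
     (\<forall>a\<in>CHom d Q q n n. nmul phi N (rho a) = nmul (rho' a) N' phi))"

definition Smod_cat :: "nat \<Rightarrow> 'k::field \<Rightarrow> 'k \<Rightarrow> nat \<Rightarrow> ('k Mobj, 'k nmat) category" where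
  "Smod_cat d Q q n = \<lparr>
     obj = {M. is_Smodule d Q q n M},
     hom = (\<lambda>M M'. {phi. is_Smodhom d Q q n M M' phi}),
     comp = (\<lambda>M M' M'' psi phi. nmul psi (fst M') phi),
     idn = (\<lambda>M. nid (fst M)) \<rparr>"

end

theory Submission
  imports Defs
begin

text \<open>V_n^{\<otimes>d} generates: the identity of every V_m^{\<otimes>d} is a sum of H^B-linear maps factoring
  through V_n^{\<otimes>d}.  Indeed V_m^{\<otimes>d} splits according to the set S of absolute values of the
  indices of a basis tensor; K_Q and R_q only move indices up to sign and only compare them, so each
  piece maps H^B-equivariantly into V_n^{\<otimes>d} by an order- and sign-preserving relabelling of S,
  which exists because |S| \<le> d \<le> r.

  Given such a splitting, restriction F \<mapsto> F(V_n) is an equivalence with modules over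
  End(V_n^{\<otimes>d}): a module M is sent back to the functor whose value at V_m is the image of the
  idempotent (M(pr_j \<circ> inc_k))_{j,k} on M^J, and the splitting provides the unit and counit
  isomorphisms.  Images of idempotents exist as every idempotent matrix over a field factors as
  A B with B A = 1.\<close>

section \<open>Matrices indexed by arbitrary types\<close>

definition mat_mult :: "'a set \<Rightarrow> ('x \<Rightarrow> 'a \<Rightarrow> 'k::field) \<Rightarrow>
    ('a \<Rightarrow> 'y \<Rightarrow> 'k) \<Rightarrow> 'x \<Rightarrow> 'y \<Rightarrow> 'k" where
  "mat_mult I A B = (\<lambda>x z. \<Sum>y\<in>I. A x y * B y z)"

definition mat_in :: "'x set \<Rightarrow> 'y set \<Rightarrow> ('x \<Rightarrow> 'y \<Rightarrow> 'k::zero)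
    \<Rightarrow> bool" where
  "mat_in X Y A \<longleftrightarrow> (\<forall>x y. A x y \<noteq> 0 \<longrightarrow> x \<in> X \<and> y \<in> Y)"

definition mat_id :: "'a set \<Rightarrow> 'a \<Rightarrow> 'a \<Rightarrow> 'k::field" where
  "mat_id I = (\<lambda>x y. if x = y \<and> x \<in> I then 1 else 0)"

lemma mat_mult_apply: "mat_mult I A B x z = (\<Sum>y\<in>I. A x y * B y z)"
  by (simp add: mat_mult_def)

lemma nmul_eq_mat_mult: "nmul A n B = mat_mult {..<n} A B"
  by (simp add: nmul_def mat_mult_def)

lemma tmul_eq_mat_mult: "tmul d m A B = mat_mult (tup d m) A B"
  by (simp add: tmul_def mat_mult_def)

lemma nid_eq_mat_id: "nid n = mat_id {..<n}"
  by (auto simp: nid_def mat_id_def fun_eq_iff)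

lemma tid_eq_mat_id: "tid d m = mat_id (tup d m)"
  by (auto simp: tid_def mat_id_def fun_eq_iff)

lemma nmat_in_iff_mat_in: "nmat_in r c A \<longleftrightarrow> mat_in {..<r} {..<c} A"
  by (simp add: nmat_in_def mat_in_def)

lemma mat_mult_assoc:
  assumes "finite I" "finite J"
  shows "mat_mult J (mat_mult I A B) C = mat_mult I A (mat_mult J B C)"
  unfolding mat_mult_def
  by (auto simp: fun_eq_iff sum_distrib_left sum_distrib_right mult.assoc intro: sum.swap)

lemma mat_mult_reassoc:
  "mat_mult J A B = E \<Longrightarrow> finite J \<Longrightarrow> finite K
      \<Longrightarrow> mat_mult J A (mat_mult K B X) = mat_mult K E X"
  using mat_mult_assoc[of J K A B X] by simp

lemma mat_mult_id_left:
  assumes "finite I" "mat_in I Y B"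
  shows "mat_mult I (mat_id I) B = B"
proof (intro ext)
  fix x z
  have "mat_mult I (mat_id I) B x z = (\<Sum>y\<in>I. if y = x then B x z else 0)"
    unfolding mat_mult_apply mat_id_def by (rule sum.cong) auto
  also have "\<dots> = B x z"
    using assms by (cases "x \<in> I") (auto simp: mat_in_def)
  finally show "mat_mult I (mat_id I) B x z = B x z" .
qed

lemma mat_mult_id_right:
  assumes "finite I" "mat_in X I B"
  shows "mat_mult I B (mat_id I) = B"
proof (intro ext)
  fix x z
  have "mat_mult I B (mat_id I) x z = (\<Sum>y\<in>I. if y = z then B x z else 0)"
    unfolding mat_mult_apply mat_id_def by (rule sum.cong) auto
  also have "\<dots> = B x z"
    using assms by (cases "z \<in> I") (auto simp: mat_in_def)
  finally show "mat_mult I B (mat_id I) x z = B x z" .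
qed

lemma mat_in_id: "mat_in I I (mat_id I)"
  by (auto simp: mat_in_def mat_id_def split: if_splits)

lemma mat_in_mult: "mat_in X J A \<Longrightarrow> mat_in J Y B \<Longrightarrow> mat_in X Y (mat_mult I A B)"
  unfolding mat_in_def mat_mult_def
  by (metis (mono_tags, lifting) mult_not_zero sum.neutral)

lemma mat_in_add:
  fixes f g :: "'x \<Rightarrow> 'y \<Rightarrow> 'k::comm_monoid_add"
  shows "mat_in X Y f \<Longrightarrow> mat_in X Y g \<Longrightarrow> mat_in X Y (\<lambda>x y. f x y + g x y)"
  unfolding mat_in_def by (metis add.right_neutral)

lemma mat_mult_add_left: "mat_mult I (\<lambda>x y. A x y + A' x y) B
    = (\<lambda>x z. mat_mult I A B x z + mat_mult I A' B x z)"
  by (simp add: mat_mult_def distrib_right sum.distrib)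

lemma mat_mult_add_right: "mat_mult I A (\<lambda>x y. B x y + B' x y)
    = (\<lambda>x z. mat_mult I A B x z + mat_mult I A B' x z)"
  by (simp add: mat_mult_def distrib_left sum.distrib)

lemma mat_mult_scal_left: "mat_mult I (\<lambda>x y. c * A x y) B = (\<lambda>x z. c * mat_mult I A B x z)"
  by (simp add: mat_mult_def sum_distrib_left mult.assoc)

lemma mat_mult_scal_right: "mat_mult I A (\<lambda>x y. c * B x y) = (\<lambda>x z. c * mat_mult I A B x z)"
  by (simp add: mat_mult_def sum_distrib_left mult.left_commute)

lemma mat_mult_sum_left: "mat_mult I (\<lambda>x y. \<Sum>j\<in>K. A j x y) B
    = (\<lambda>x z. \<Sum>j\<in>K. mat_mult I (A j) B x z)"
  by (simp add: mat_mult_def sum_distrib_right sum.swap[of _ I])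

lemma mat_mult_sum_right: "mat_mult I A (\<lambda>x y. \<Sum>j\<in>K. B j x y)
    = (\<lambda>x z. \<Sum>j\<in>K. mat_mult I A (B j) x z)"
  by (simp add: mat_mult_def sum_distrib_left sum.swap[of _ I])

lemma relabel_intertwines:
  fixes T1 :: "'a \<Rightarrow> 'a \<Rightarrow> 'k::field" and T2 :: "'b \<Rightarrow> 'b \<Rightarrow> 'k"
    and \<phi> :: "'a \<Rightarrow> 'b"
  assumes X1: "finite X1" and X2: "finite X2"
    and A: "A \<subseteq> X1" and phA: "\<phi> ` A \<subseteq> X2" and inj: "inj_on \<phi> A"
    and A_inv: "\<And>y z. T1 y z \<noteq> 0 \<Longrightarrow> (y \<in> A \<longleftrightarrow> z \<in> A)"
    and img_inv: "\<And>w w'. T2 w w' \<noteq> 0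
        \<Longrightarrow> (w \<in> \<phi> ` A \<longleftrightarrow> w' \<in> \<phi> ` A)"
    and transport: "\<And>y z. y \<in> A \<Longrightarrow> z \<in> A \<Longrightarrow> 
        T2 (\<phi> y) (\<phi> z) = T1 y z"
  shows "mat_mult X1 (\<lambda>x' y. if y \<in> A \<and> x' = \<phi> y then 1 else 0) T1
      = mat_mult X2 T2 (\<lambda>x' y. if y \<in> A \<and> x' = \<phi> y then 1 else 0)"
proof (intro ext)
  fix x' z
  have L: "mat_mult X1 (\<lambda>x' y. if y \<in> A \<and> x' = \<phi> y then 1 else 0) T1 x' z
      = (\<Sum>y\<in>X1. if y \<in> A \<and> x' = \<phi> y then T1 y z else 0)"
    unfolding mat_mult_apply by (rule sum.cong) auto
  have "mat_mult X2 T2 (\<lambda>x' y. if y \<in> A \<and> x' = \<phi> y then 1 else 0) x' z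
      = (\<Sum>w\<in>X2. if w = \<phi> z then (if z \<in> A then T2 x' w else 0) else 0)"
    unfolding mat_mult_apply by (rule sum.cong) auto
  also have "\<dots> = (if z \<in> A then T2 x' (\<phi> z) else 0)"
    using X2 phA by (auto simp: sum.delta')
  finally have R: "mat_mult X2 T2 (\<lambda>x' y. if y \<in> A \<and> x' = \<phi> y then 1 else 0) x' z
      = (if z \<in> A then T2 x' (\<phi> z) else 0)" .
  show "mat_mult X1 (\<lambda>x' y. if y \<in> A \<and> x' = \<phi> y then 1 else 0) T1 x' z
      = mat_mult X2 T2 (\<lambda>x' y. if y \<in> A \<and> x' = \<phi> y then 1 else 0) x' z"
  proof (cases "x' \<in> \<phi> ` A")
    case True
    then obtain y0 where y0: "y0 \<in> A" "x' = \<phi> y0" by blast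
    have "(\<Sum>y\<in>X1. if y \<in> A \<and> x' = \<phi> y then T1 y z else 0)
        = (\<Sum>y\<in>X1. if y = y0 then T1 y0 z else 0)"
      using y0 inj by (intro sum.cong) (auto simp: inj_on_def)
    also have "\<dots> = T1 y0 z" using X1 A y0 by (auto simp: sum.delta')
    finally have "mat_mult X1 (\<lambda>x' y. if y \<in> A \<and> x' = \<phi> y then 1 else 0) T1 x' z
        = T1 y0 z" using L by simp
    moreover have "T1 y0 z = (if z \<in> A then T2 x' (\<phi> z) else 0)"
      using transport[OF y0(1)] A_inv[of y0 z] y0 by auto
    ultimately show ?thesis using R by simp
  next
    case False
    have "(\<Sum>y\<in>X1. if y \<in> A \<and> x' = \<phi> y then T1 y z else 0) = 0"
      using False by (intro sum.neutral) auto
    moreover have "(if z \<in> A then T2 x' (\<phi> z) else 0) = 0"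
      using img_inv[of x' "\<phi> z"] False by auto
    ultimately show ?thesis using L R by simp
  qed
qed

lemma relabel_transpose_intertwines:
  fixes T1 :: "'a \<Rightarrow> 'a \<Rightarrow> 'k::field" and T2 :: "'b \<Rightarrow> 'b \<Rightarrow> 'k"
    and \<phi> :: "'a \<Rightarrow> 'b"
  assumes X1: "finite X1" and X2: "finite X2"
    and A: "A \<subseteq> X1" and phA: "\<phi> ` A \<subseteq> X2" and inj: "inj_on \<phi> A"
    and A_inv: "\<And>y z. T1 y z \<noteq> 0 \<Longrightarrow> (y \<in> A \<longleftrightarrow> z \<in> A)"
    and img_inv: "\<And>w w'. T2 w w' \<noteq> 0
        \<Longrightarrow> (w \<in> \<phi> ` A \<longleftrightarrow> w' \<in> \<phi> ` A)"
    and transport: "\<And>y z. y \<in> A \<Longrightarrow> z \<in> A \<Longrightarrow> 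
        T2 (\<phi> y) (\<phi> z) = T1 y z"
  shows "mat_mult X2 (\<lambda>y x'. if y \<in> A \<and> x' = \<phi> y then 1 else 0) T2
      = mat_mult X1 T1 (\<lambda>y x'. if y \<in> A \<and> x' = \<phi> y then 1 else 0)"
proof -
  let ?psi = "inv_into A \<phi>"
  have eqP: "(\<lambda>y x'. if y \<in> A \<and> x' = \<phi> y then 1 else 0)
      = (\<lambda>y x'. if x' \<in> \<phi> ` A \<and> y = ?psi x' then (1::'k) else 0)"
    using inj by (auto simp: fun_eq_iff inv_into_f_f)
  have img: "?psi ` \<phi> ` A = A" using inj by (simp add: inv_into_image_cancel)
  have "mat_mult X2 (\<lambda>y x'. if x' \<in> \<phi> ` A \<and> y = ?psi x' then (1::'k) else 0) T2
      = mat_mult X1 T1 (\<lambda>y x'. if x' \<in> \<phi> ` A \<and> y = ?psi x' then 1 else 0)"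
  proof (rule relabel_intertwines[OF X2 X1 phA])
    show "?psi ` \<phi> ` A \<subseteq> X1" using img A by simp
    show "inj_on ?psi (\<phi> ` A)" by (rule inj_on_inv_into) simp
    show "\<And>w w'. T2 w w' \<noteq> 0
        \<Longrightarrow> (w \<in> \<phi> ` A \<longleftrightarrow> w' \<in> \<phi> ` A)" by (rule img_inv)
    show "\<And>y z. T1 y z \<noteq> 0
        \<Longrightarrow> (y \<in> ?psi ` \<phi> ` A \<longleftrightarrow> z \<in> ?psi ` \<phi> ` A)" 
      using img A_inv by simp
    fix w w' assume "w \<in> \<phi> ` A" "w' \<in> \<phi> ` A"
    then obtain y y' where "y \<in> A" "y' \<in> A" "w = \<phi> y" "w' = \<phi> y'" by blast
    thus "T1 (?psi w) (?psi w') = T2 w w'" using inj transport by (simp add: inv_into_f_f)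
  qed
  thus ?thesis using eqP by simp
qed

section \<open>Splitting idempotent matrices\<close>

lemma idempotent_deflate:
  fixes E :: "'i \<Rightarrow> 'i \<Rightarrow> 'k::field"
  assumes fin: "finite I" and supp: "mat_in I I E" and idem: "mat_mult I E E = E" and nz: "E a0 b0 \<noteq> 0"
  defines "E' \<equiv> \<lambda>a b. E a b - E a b0 * E a0 b / E a0 b0"
  shows "mat_in I I E'" "mat_mult I E' E = E'" "mat_mult I E E' = E'" "mat_mult I E' E' = E'"
proof -
  let ?c = "E a0 b0"
  have EE: "\<And>a b. (\<Sum>c\<in>I. E a c * E c b) = E a b"
    using idem by (simp add: mat_mult_def fun_eq_iff)
  have "E' x y = 0" if "x \<notin> I \<or> y \<notin> I" for x y
    using that supp unfolding mat_in_def E'_def by (metis diff_self div_0 mult_zero_left mult_zero_right)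
  thus "mat_in I I E'" by (auto simp: mat_in_def)
  have E'_b0: "E' a b0 = 0" for a using nz by (simp add: E'_def)
  show E'E: "mat_mult I E' E = E'"
  proof (intro ext)
    fix a b
    have "mat_mult I E' E a b = (\<Sum>c\<in>I. E a c * E c b) - E a b0 / ?c * (\<Sum>c\<in>I. E a0 c * E c b)"
      by (simp add: mat_mult_def E'_def algebra_simps sum_subtractf sum_distrib_left sum_divide_distrib)
    thus "mat_mult I E' E a b = E' a b" by (simp add: EE E'_def)
  qed
  show "mat_mult I E E' = E'"
  proof (intro ext)
    fix a b
    have "mat_mult I E E' a b = (\<Sum>c\<in>I. E a c * E c b) - E a0 b / ?c * (\<Sum>c\<in>I. E a c * E c b0)"
      by (simp add: mat_mult_def E'_def algebra_simps sum_subtractf sum_distrib_left sum_divide_distrib)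
    thus "mat_mult I E E' a b = E' a b" by (simp add: EE E'_def)
  qed
  show "mat_mult I E' E' = E'"
  proof (intro ext)
    fix a b
    have "mat_mult I E' E' a b = (\<Sum>c\<in>I. E' a c * (E c b - E c b0 * E a0 b / ?c))"
      by (simp add: mat_mult_def E'_def)
    also have "\<dots> = (\<Sum>c\<in>I. E' a c * E c b) - E a0 b / ?c * (\<Sum>c\<in>I. E' a c * E c b0)"
      by (simp add: algebra_simps sum_subtractf sum_distrib_left sum_divide_distrib)
    also have "\<dots> = E' a b - E a0 b / ?c * E' a b0"
      using E'E by (simp add: mat_mult_def fun_eq_iff)
    finally show "mat_mult I E' E' a b = E' a b" using E'_b0 by simp
  qed
qed

definition idem_split :: "'i set \<Rightarrow> nat \<Rightarrow> ('i \<Rightarrow> nat \<Rightarrow> 'k::field)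
    \<Rightarrow> (nat \<Rightarrow> 'i \<Rightarrow> 'k) \<Rightarrow> ('i \<Rightarrow> 'i \<Rightarrow> 'k)
    \<Rightarrow> bool" where
  "idem_split I r A B E \<longleftrightarrow> mat_in I {..<r} A \<and> mat_in {..<r} I B \<and>
     mat_mult {..<r} A B = E \<and> mat_mult I B A = mat_id {..<r}"

lemma idem_split_absorb:
  assumes "idem_split I r A B E" "finite I"
  shows "mat_mult I E A = A" "mat_mult I B E = B"
proof -
  have AB: "mat_mult {..<r} A B = E" and BA: "mat_mult I B A = mat_id {..<r}"
    and A: "mat_in I {..<r} A" and B: "mat_in {..<r} I B"
    using assms(1) by (auto simp: idem_split_def)
  have "mat_mult I E A = mat_mult {..<r} A (mat_mult I B A)"
    by (simp add: AB[symmetric] mat_mult_assoc[OF finite_lessThan assms(2)])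
  thus "mat_mult I E A = A" using BA mat_mult_id_right[OF _ A] by simp
  have "mat_mult I B E = mat_mult {..<r} (mat_mult I B A) B"
    by (simp add: AB[symmetric] mat_mult_assoc[OF assms(2) finite_lessThan])
  thus "mat_mult I B E = B" using BA mat_mult_id_left[OF _ B] by simp
qed

lemma idem_split_deflated_orth:
  fixes E :: "'i \<Rightarrow> 'i \<Rightarrow> 'k::field"
  assumes fin: "finite I" and supp: "mat_in I I E" and idem: "mat_mult I E E = E" and nz: "E a0 b0 \<noteq> 0"
    and split': "idem_split I r A' B' (\<lambda>a b. E a b - E a b0 * E a0 b / E a0 b0)"
  shows "(\<Sum>a\<in>I. B' l a * E a b0) = 0" "(\<Sum>a\<in>I. E a0 a / E a0 b0 * A' a l) = 0"
proof -
  define E' where "E' \<equiv> \<lambda>a b. E a b - E a b0 * E a0 b / E a0 b0"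
  note deflate = idempotent_deflate[OF fin supp idem nz, folded E'_def]
  note absorb = idem_split_absorb[OF split'[folded E'_def] fin]
  have E'_b0: "E' a b0 = 0" and E'_a0: "E' a0 b = 0" for a b using nz by (simp_all add: E'_def)
  have "(\<Sum>a\<in>I. B' l a * E a b0) = mat_mult I B' (mat_mult I E' E) l b0"
    using absorb(2) by (simp add: mat_mult_assoc[OF fin fin, symmetric] mat_mult_apply)
  thus "(\<Sum>a\<in>I. B' l a * E a b0) = 0" using deflate(2) E'_b0 by (simp add: mat_mult_apply)
  have "(\<Sum>a\<in>I. E a0 a / E a0 b0 * A' a l) = mat_mult I (mat_mult I E E') A' a0 l / E a0 b0"
    using absorb(1) by (simp add: mat_mult_assoc[OF fin fin] mat_mult_apply sum_divide_distrib)
  thus "(\<Sum>a\<in>I. E a0 a / E a0 b0 * A' a l) = 0" using deflate(3) E'_a0 by (simp add: mat_mult_apply)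
qed

text \<open>The new column of A and row of B form the rank-one piece removed by deflation.\<close>

lemma idem_split_extend:
  fixes E :: "'i \<Rightarrow> 'i \<Rightarrow> 'k::field"
  assumes fin: "finite I" and supp: "mat_in I I E" and idem: "mat_mult I E E = E"
    and a0: "a0 \<in> I" and b0: "b0 \<in> I" and nz: "E a0 b0 \<noteq> 0"
    and split': "idem_split I r A' B' (\<lambda>a b. E a b - E a b0 * E a0 b / E a0 b0)"
  defines "A \<equiv> \<lambda>a l. if l < r then A' a l else if l = r then E a b0 else 0"
    and "B \<equiv> \<lambda>l b. if l < r then B' l b else if l = r then E a0 b / E a0 b0 else 0"
  shows "idem_split I (Suc r) A B E"
proof -
  have sA: "mat_in I {..<r} A'" and sB: "mat_in {..<r} I B'"
    and AB: "mat_mult {..<r} A' B' = (\<lambda>a b. E a b - E a b0 * E a0 b / E a0 b0)"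
    and BA: "mat_mult I B' A' = mat_id {..<r}"
    using split' by (auto simp: idem_split_def)
  note orth = idem_split_deflated_orth[OF fin supp idem nz split']
  have pivot: "(\<Sum>a\<in>I. E a0 a / E a0 b0 * E a b0) = 1"
    using fun_cong[OF fun_cong[OF idem, of a0], of b0] nz
    by (simp add: mat_mult_apply sum_divide_distrib[symmetric])
  have "mat_mult {..<Suc r} A B = E"
  proof (intro ext)
    fix a b
    have "mat_mult {..<Suc r} A B a b = mat_mult {..<r} A' B' a b + E a b0 * (E a0 b / E a0 b0)"
      by (simp add: mat_mult_apply A_def B_def)
    thus "mat_mult {..<Suc r} A B a b = E a b" using AB by simp
  qed
  moreover have "mat_mult I B A l l' = mat_id {..<Suc r} l l'" for l l'
  proof -
    consider "l < r" "l' < r" | "l < r" "r \<le> l'" | "l = r" "l' < r" | "l = r" "r \<le> l'" | "r < l"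
      by linarith
    thus ?thesis
    proof cases
      case 1 thus ?thesis using BA by (simp add: mat_mult_apply A_def B_def mat_id_def fun_eq_iff)
    next
      case 2 thus ?thesis using orth(1)[of l] by (cases "l' = r") (auto simp: mat_mult_apply A_def B_def mat_id_def)
    next
      case 3 thus ?thesis using orth(2)[of l'] by (auto simp: mat_mult_apply A_def B_def mat_id_def)
    next
      case 4 thus ?thesis using pivot by (cases "l' = r") (auto simp: mat_mult_apply A_def B_def mat_id_def)
    next
      case 5 thus ?thesis by (auto simp: mat_mult_apply A_def B_def mat_id_def)
    qed
  qed
  moreover have "mat_in I {..<Suc r} A" using sA supp b0 by (auto simp: mat_in_def A_def)
  moreover have "mat_in {..<Suc r} I B" using sB supp a0 by (auto simp: mat_in_def B_def)
  ultimately show ?thesis by (auto simp: idem_split_def)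
qed

text \<open>Induction on the number of nonzero rows, which deflation strictly decreases.\<close>

lemma idempotent_splits:
  fixes E :: "'i \<Rightarrow> 'i \<Rightarrow> 'k::field"
  assumes "finite I" "mat_in I I E" "mat_mult I E E = E"
  shows "\<exists>r A B. idem_split I r A B E"
  using assms
proof (induction "card {a\<in>I. \<exists>b\<in>I. E a b \<noteq> 0}" arbitrary: E rule: less_induct)
  case less
  note fin = less.prems(1) and supp = less.prems(2) and idem = less.prems(3)
  show ?case
  proof (cases "\<forall>a\<in>I. \<forall>b\<in>I. E a b = 0")
    case True
    hence "E = (\<lambda>a b. 0)" using supp unfolding mat_in_def fun_eq_iff by metis
    hence "idem_split I 0 (\<lambda>_ _. 0) (\<lambda>_ _. 0) E"
      by (simp add: idem_split_def mat_in_def mat_mult_def mat_id_def fun_eq_iff)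
    thus ?thesis by blast
  next
    case False
    then obtain a0 b0 where a0: "a0 \<in> I" and b0: "b0 \<in> I" and nz: "E a0 b0 \<noteq> 0" by blast
    define E' where "E' \<equiv> \<lambda>a b. E a b - E a b0 * E a0 b / E a0 b0"
    note deflate = idempotent_deflate[OF fin supp idem nz, folded E'_def]
    have "{a\<in>I. \<exists>b\<in>I. E' a b \<noteq> 0} \<subset> {a\<in>I. \<exists>b\<in>I. E a b \<noteq> 0}"
    proof
      show "{a\<in>I. \<exists>b\<in>I. E' a b \<noteq> 0} \<subseteq> {a\<in>I. \<exists>b\<in>I. E a b \<noteq> 0}"
        using b0 by (auto simp: E'_def) (metis diff_zero div_0 mult_zero_left)
      have "a0 \<notin> {a\<in>I. \<exists>b\<in>I. E' a b \<noteq> 0}" using nz by (simp add: E'_def)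
      thus "{a\<in>I. \<exists>b\<in>I. E' a b \<noteq> 0} \<noteq>
          {a\<in>I. \<exists>b\<in>I. E a b \<noteq> 0}" using a0 b0 nz by blast
    qed
    hence "card {a\<in>I. \<exists>b\<in>I. E' a b \<noteq> 0} < card {a\<in>I. \<exists>b\<in>I. E a b \<noteq> 0}"
      by (rule psubset_card_mono[rotated]) (use fin in auto)
    from less.hyps[OF this fin deflate(1) deflate(4)] obtain r A' B' where "idem_split I r A' B' E'"
      by blast
    thus ?thesis using idem_split_extend[OF fin supp idem a0 b0 nz] unfolding E'_def by blast
  qed
qed

section \<open>Morphisms of the category C^B_d\<close>

lemma finite_idx: "finite (idx m)"
proof -
  have "idx m \<subseteq> {- int m..int m}" by (auto simp: idx_def)
  thus ?thesis by (rule finite_subset) simp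
qed

lemma finite_tup: "finite (tup d m)"
proof -
  have "tup d m = {xs. set xs \<subseteq> idx m \<and> length xs = d}" by (auto simp: tup_def)
  thus ?thesis using finite_lists_length_eq[OF finite_idx] by simp
qed

lemma mat_in_Tgen: "mat_in (tup d m) (tup d m) (Tgen d Q q m i)"
  by (auto simp: mat_in_def Tgen_def split: if_splits)

lemma CHom_iff: "f \<in> CHom d Q q m m' \<longleftrightarrow> mat_in (tup d m') (tup d m) f \<and>
   (\<forall>i<d. mat_mult (tup d m) f (Tgen d Q q m i) = mat_mult (tup d m') (Tgen d Q q m' i) f)"
  by (simp add: CHom_def mat_in_def tmul_eq_mat_mult)

lemma CHom_mat_in: "f \<in> CHom d Q q m m' \<Longrightarrow> mat_in (tup d m') (tup d m) f"
  by (simp add: CHom_iff)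

lemma CHom_comp:
  assumes f: "f \<in> CHom d Q q m m'" and g: "g \<in> CHom d Q q m' m''"
  shows "mat_mult (tup d m') g f \<in> CHom d Q q m m''"
  unfolding CHom_iff
proof (intro conjI allI impI)
  show "mat_in (tup d m'') (tup d m) (mat_mult (tup d m') g f)"
    using f g by (intro mat_in_mult) (auto simp: CHom_iff)
  fix i assume i: "i < d"
  have fi: "mat_mult (tup d m) f (Tgen d Q q m i)
      = mat_mult (tup d m') (Tgen d Q q m' i) f" using f i by (simp add: CHom_iff)
  have gi: "mat_mult (tup d m') g (Tgen d Q q m' i)
      = mat_mult (tup d m'') (Tgen d Q q m'' i) g" using g i by (simp add: CHom_iff)
  have "mat_mult (tup d m) (mat_mult (tup d m') g f) (Tgen d Q q m i)
      = mat_mult (tup d m') g (mat_mult (tup d m) f (Tgen d Q q m i))"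
    by (simp add: mat_mult_assoc finite_tup)
  also have "\<dots> = mat_mult (tup d m') (mat_mult (tup d m') g (Tgen d Q q m' i)) f"
    by (simp add: fi mat_mult_assoc finite_tup)
  also have "\<dots> = mat_mult (tup d m'') (Tgen d Q q m'' i) (mat_mult (tup d m') g f)"
    by (simp add: gi mat_mult_assoc finite_tup)
  finally show "mat_mult (tup d m) (mat_mult (tup d m') g f) (Tgen d Q q m i)
      = mat_mult (tup d m'') (Tgen d Q q m'' i) (mat_mult (tup d m') g f)" .
qed

lemma mat_mult_tid_left: "f \<in> CHom d Q q m m' \<Longrightarrow> mat_mult (tup d m') (tid d m') f = f"
  unfolding tid_eq_mat_id by (rule mat_mult_id_left[OF finite_tup CHom_mat_in])

lemma mat_mult_tid_right: "f \<in> CHom d Q q m m' \<Longrightarrow> mat_mult (tup d m) f (tid d m) = f"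
  unfolding tid_eq_mat_id by (rule mat_mult_id_right[OF finite_tup CHom_mat_in])

lemma CHom_tid: "tid d m \<in> CHom d Q q m m"
  unfolding CHom_iff tid_eq_mat_id
proof (intro conjI allI impI)
  show "mat_in (tup d m) (tup d m) (mat_id (tup d m))" by (rule mat_in_id)
  fix i
  show "mat_mult (tup d m) (mat_id (tup d m)) (Tgen d Q q m i)
      = mat_mult (tup d m) (Tgen d Q q m i) (mat_id (tup d m))"
    by (simp only: mat_mult_id_left[OF finite_tup mat_in_Tgen] mat_mult_id_right[OF finite_tup mat_in_Tgen])
qed

lemma CHom_add: "f \<in> CHom d Q q m m' \<Longrightarrow> g \<in> CHom d Q q m m'
    \<Longrightarrow> (\<lambda>x y. f x y + g x y) \<in> CHom d Q q m m'"
  unfolding CHom_iff by (simp only: mat_in_add mat_mult_add_left mat_mult_add_right) simp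

lemma CHom_zero: "(\<lambda>x y. 0) \<in> CHom d Q q m m'"
  unfolding CHom_iff by (auto simp: mat_in_def mat_mult_def)

lemma CHom_sum: "finite K \<Longrightarrow> (\<And>j. j \<in> K \<Longrightarrow> f j \<in> CHom d Q q m m')
    \<Longrightarrow> (\<lambda>x y. \<Sum>j\<in>K. f j x y) \<in> CHom d Q q m m'"
proof (induction K rule: finite_induct)
  case empty thus ?case using CHom_zero by simp
next
  case (insert j K)
  have "(\<lambda>x y. f j x y + (\<Sum>j\<in>K. f j x y)) \<in> CHom d Q q m m'"
    using insert by (intro CHom_add) auto
  thus ?case using insert by simp
qed


section \<open>Morita equivalence from a splitting through V_n\<close>

locale generator_splitting =
  fixes d :: nat and Q q :: "'k::field" and n :: nat
    and J :: "nat \<Rightarrow> 'j set" and pr :: "nat \<Rightarrow> 'j \<Rightarrow> 'k tmat" and inc :: "nat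
        \<Rightarrow> 'j \<Rightarrow> 'k tmat"
  assumes n_pos: "1 \<le> n"
    and finite_J: "finite (J m)"
    and pr_Hom: "1 \<le> m \<Longrightarrow> j \<in> J m \<Longrightarrow> pr m j \<in> CHom d Q q m n"
    and inc_Hom: "1 \<le> m \<Longrightarrow> j \<in> J m \<Longrightarrow> inc m j \<in> CHom d Q q n m"
    and inc_pr_sum: "1 \<le> m \<Longrightarrow>
        (\<lambda>x y. \<Sum>j\<in>J m. mat_mult (tup d n) (inc m j) (pr m j) x y) = tid d m"
begin

abbreviation Hom :: "nat \<Rightarrow> nat \<Rightarrow> 'k tmat set" where "Hom m m' \<equiv> CHom d Q q m m'"
abbreviation cmp :: "nat \<Rightarrow> 'k tmat \<Rightarrow> 'k tmat \<Rightarrow> 'k tmat" where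
  "cmp m g f \<equiv> mat_mult (tup d m) g f"

lemma cmp_Hom: "f \<in> Hom m m' \<Longrightarrow> g \<in> Hom m' m'' \<Longrightarrow> cmp m' g f \<in> Hom m m''"
  by (rule CHom_comp)

lemma cmp_assoc: "cmp m (cmp m' A B) X = cmp m' A (cmp m B X)"
  by (simp add: mat_mult_assoc finite_tup)

lemma sum_inc_pr_mult:
  assumes m: "1 \<le> m" and B: "mat_in (tup d m) Y B"
  shows "(\<lambda>x y. \<Sum>l\<in>J m. cmp n (inc m l) (cmp m (pr m l) B) x y) = B"
proof -
  have "(\<lambda>x y. \<Sum>l\<in>J m. cmp n (inc m l) (cmp m (pr m l) B) x y)
      = (\<lambda>x y. \<Sum>l\<in>J m. cmp m (cmp n (inc m l) (pr m l)) B x y)"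
    by (simp add: cmp_assoc)
  also have "\<dots> = cmp m (\<lambda>x y. \<Sum>l\<in>J m. cmp n (inc m l) (pr m l) x y) B"
    by (rule mat_mult_sum_left[symmetric])
  also have "\<dots> = B" using inc_pr_sum[OF m] by (simp add: tid_eq_mat_id mat_mult_id_left[OF finite_tup B])
  finally show ?thesis .
qed

text \<open>A k-linear functor on the full subcategory of C^B_d with object set Ob: for Ob = {m. 1 \<le> m}
  these are the objects of P^d_{Q,q}, for Ob = {n} the End(V_n^{\<otimes>d})-modules.\<close>

definition linfun :: "nat set \<Rightarrow> (nat \<Rightarrow> nat) \<Rightarrow>
    (nat \<Rightarrow> nat \<Rightarrow> 'k tmat \<Rightarrow> 'k nmat) \<Rightarrow> bool" where
  "linfun Ob D F \<longleftrightarrow>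
     (\<forall>a\<in>Ob. \<forall>b\<in>Ob. \<forall>f\<in>Hom a b. mat_in {..<D b} {..<D a} (F a b f)) \<and>
     (\<forall>a\<in>Ob. \<forall>b\<in>Ob. \<forall>f\<in>Hom a b. \<forall>g\<in>Hom a b. \<forall>c.
        F a b (\<lambda>x y. f x y + g x y) = (\<lambda>i j. F a b f i j + F a b g i j) \<and>
        F a b (\<lambda>x y. c * f x y) = (\<lambda>i j. c * F a b f i j)) \<and>
     (\<forall>a\<in>Ob. \<forall>b\<in>Ob. \<forall>c\<in>Ob. \<forall>f\<in>Hom a b. \<forall>g\<in>Hom b c.
        F a c (cmp b g f) = mat_mult {..<D b} (F b c g) (F a b f)) \<and>
     (\<forall>a\<in>Ob. F a a (tid d a) = mat_id {..<D a})"

lemma linfun_mat_in: "linfun Ob D F \<Longrightarrow> a \<in> Ob \<Longrightarrow> b \<in> Ob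
    \<Longrightarrow> f \<in> Hom a b \<Longrightarrow> mat_in {..<D b} {..<D a} (F a b f)"
  by (simp add: linfun_def)

lemma linfun_add: "linfun Ob D F \<Longrightarrow> a \<in> Ob \<Longrightarrow> b \<in> Ob
    \<Longrightarrow> f \<in> Hom a b \<Longrightarrow> g \<in> Hom a b \<Longrightarrow>
   F a b (\<lambda>x y. f x y + g x y) = (\<lambda>i j. F a b f i j + F a b g i j)"
  by (simp add: linfun_def)

lemma linfun_scal: "linfun Ob D F \<Longrightarrow> a \<in> Ob \<Longrightarrow> b \<in> Ob
    \<Longrightarrow> f \<in> Hom a b \<Longrightarrow>
   F a b (\<lambda>x y. c * f x y) = (\<lambda>i j. c * F a b f i j)"
  by (simp add: linfun_def)

lemma linfun_comp: "linfun Ob D F \<Longrightarrow> a \<in> Ob \<Longrightarrow> b \<in> Ob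
    \<Longrightarrow> c \<in> Ob \<Longrightarrow> f \<in> Hom a b \<Longrightarrow> g \<in> Hom b c \<Longrightarrow>
   F a c (cmp b g f) = mat_mult {..<D b} (F b c g) (F a b f)"
  by (simp add: linfun_def)

lemma linfun_id: "linfun Ob D F \<Longrightarrow> a \<in> Ob \<Longrightarrow> F a a (tid d a) = mat_id {..<D a}"
  by (simp add: linfun_def)

lemma linfun_zero:
  assumes "linfun Ob D F" "a \<in> Ob" "b \<in> Ob"
  shows "F a b (\<lambda>x y. 0) = (\<lambda>i j. 0)"
proof -
  have "F a b (\<lambda>x y. 0 * (\<lambda>x y. 0::'k) x y) = (\<lambda>i j. 0 * F a b (\<lambda>x y. 0) i j)"
    by (rule linfun_scal[OF assms CHom_zero])
  thus ?thesis by simp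
qed

lemma linfun_sum:
  assumes G: "linfun Ob D F" "a \<in> Ob" "b \<in> Ob" and K: "finite K" 
    and f: "\<And>l. l \<in> K \<Longrightarrow> f l \<in> Hom a b"
  shows "F a b (\<lambda>x y. \<Sum>l\<in>K. f l x y) = (\<lambda>i j. \<Sum>l\<in>K. F a b (f l) i j)"
  using K f
proof (induction K rule: finite_induct)
  case empty thus ?case using linfun_zero[OF G] by simp
next
  case (insert l K)
  have "F a b (\<lambda>x y. \<Sum>l\<in>insert l K. f l x y)
      = F a b (\<lambda>x y. f l x y + (\<Sum>l\<in>K. f l x y))"
    using insert by simp
  also have "\<dots> = (\<lambda>i j. F a b (f l) i j + F a b (\<lambda>x y. \<Sum>l\<in>K. f l x y) i j)"
    using insert by (intro linfun_add[OF G]) (auto intro!: CHom_sum)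
  also have "\<dots> = (\<lambda>i j. \<Sum>l\<in>insert l K. F a b (f l) i j)"
    using insert by simp
  finally show ?case .
qed

definition blk :: "nat \<Rightarrow> nat \<Rightarrow> ('j \<times> nat) set" where
  "blk N m = J m \<times> {..<N}"

lemma finite_blk: "finite (blk N m)"
  by (simp add: blk_def finite_J)

text \<open>At f = id this is an idempotent on N^{J m}; its image is the value at V_m of the functor
  induced by the module.\<close>

definition blk_mat :: "nat \<Rightarrow> ('k tmat \<Rightarrow> 'k nmat) \<Rightarrow> nat \<Rightarrow> nat
    \<Rightarrow> 'k tmat \<Rightarrow> ('j \<times> nat) \<Rightarrow> ('j \<times> nat) \<Rightarrow> 'k" where
  "blk_mat N \<rho> m m' f = (\<lambda>(j,a) (k,b). if j \<in> J m'
      \<and> k \<in> J m then \<rho> (cmp m' (pr m' j) (cmp m f (inc m k))) a b else 0)"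

lemma sum_blk: "(\<Sum>x\<in>blk N m. g x) = (\<Sum>l\<in>J m. \<Sum>c<N. g (l, c))"
  by (simp add: blk_def sum.cartesian_product)

lemma pr_cmp_inc_Hom: "1 \<le> m \<Longrightarrow> 1 \<le> m' \<Longrightarrow> j \<in> J m'
    \<Longrightarrow> k \<in> J m \<Longrightarrow> f \<in> Hom m m' \<Longrightarrow>
   cmp m' (pr m' j) (cmp m f (inc m k)) \<in> Hom n n"
  by (intro cmp_Hom inc_Hom pr_Hom) auto

lemma blk_mat_in:
  assumes G: "linfun Ob D F" "n \<in> Ob" and m: "1 \<le> m" "1 \<le> m'" and f: "f \<in> Hom m m'"
  shows "mat_in (blk (D n) m') (blk (D n) m) (blk_mat (D n) (F n n) m m' f)"
  unfolding mat_in_def blk_def blk_mat_def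
proof (clarify)
  fix j a k b assume h: "(if j \<in> J m'
      \<and> k \<in> J m then F n n (cmp m' (pr m' j) (cmp m f (inc m k))) a b else 0) \<noteq> 0"
  hence jk: "j \<in> J m'" "k \<in> J m" by (auto split: if_splits)
  with h have "F n n (cmp m' (pr m' j) (cmp m f (inc m k))) a b \<noteq> 0" by simp
  moreover have "mat_in {..<D n} {..<D n} (F n n (cmp m' (pr m' j) (cmp m f (inc m k))))"
    using linfun_mat_in[OF G(1) G(2) G(2) pr_cmp_inc_Hom[OF m jk(1,2) f]] .
  ultimately have "a < D n" "b < D n" by (auto simp: mat_in_def)
  thus "(j, a) \<in> J m' \<times> {..<D n} \<and> (k, b) \<in> J m \<times> {..<D n}" using jk by simp
qed

lemma linfun_through_generator:
  assumes G: "linfun Ob D F" "n \<in> Ob" "a \<in> Ob" "b \<in> Ob" and m: "1 \<le> m"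
    and U: "U \<in> Hom m b" and V: "V \<in> Hom a m"
  shows "(\<Sum>l\<in>J m. \<Sum>c<D n. F n b (cmp m U (inc m l)) i c * F a n (cmp m (pr m l) V) c j)
      = F a b (cmp m U V) i j"
proof -
  have X: "l \<in> J m \<Longrightarrow> cmp m U (inc m l) \<in> Hom n b" for l using U m by
      (intro cmp_Hom inc_Hom) auto
  have Y: "l \<in> J m \<Longrightarrow> cmp m (pr m l) V \<in> Hom a n" for l using V m by
      (intro cmp_Hom pr_Hom) auto
  have "(\<Sum>l\<in>J m. \<Sum>c<D n. F n b (cmp m U (inc m l)) i c * F a n (cmp m (pr m l) V) c j)
      = (\<Sum>l\<in>J m. F a b (cmp n (cmp m U (inc m l)) (cmp m (pr m l) V)) i j)"
  proof (rule sum.cong)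
    fix l assume l: "l \<in> J m"
    show "(\<Sum>c<D n. F n b (cmp m U (inc m l)) i c * F a n (cmp m (pr m l) V) c j)
        = F a b (cmp n (cmp m U (inc m l)) (cmp m (pr m l) V)) i j"
      using linfun_comp[OF G(1) G(3) G(2) G(4) Y[OF l] X[OF l]] by (simp add: mat_mult_apply)
  qed simp
  also have "\<dots> = F a b (\<lambda>x y. \<Sum>l\<in>J m. cmp n (cmp m U (inc m l)) (cmp m (pr m l) V) x y) i j"
    using linfun_sum[OF G(1) G(3) G(4) finite_J, where f="\<lambda>l. cmp n (cmp m U (inc m l))
        (cmp m (pr m l) V)"] X Y
    by (simp add: CHom_comp)
  also have "(\<lambda>x y. \<Sum>l\<in>J m. cmp n (cmp m U (inc m l)) (cmp m (pr m l) V) x y) = cmp m U V"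
  proof -
    have "(\<lambda>x y. \<Sum>l\<in>J m. cmp n (cmp m U (inc m l)) (cmp m (pr m l) V) x y)
        = (\<lambda>x y. \<Sum>l\<in>J m. cmp m U (cmp n (inc m l) (cmp m (pr m l) V)) x y)"
      by (simp add: cmp_assoc)
    also have "\<dots> = cmp m U (\<lambda>x y. \<Sum>l\<in>J m. cmp n (inc m l) (cmp m (pr m l) V) x y)"
      by (rule mat_mult_sum_right[symmetric])
    also have "\<dots> = cmp m U V" using sum_inc_pr_mult[OF m CHom_mat_in[OF V]] by simp
    finally show ?thesis .
  qed
  finally show ?thesis .
qed

lemma blk_mat_mult:
  assumes G: "linfun Ob D F" "n \<in> Ob" and m: "1 \<le> m" "1 \<le> m'" "1 \<le> m''"
    and f: "f \<in> Hom m m'" and g: "g \<in> Hom m' m''"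
  shows "mat_mult (blk (D n) m') (blk_mat (D n) (F n n) m' m'' g) (blk_mat (D n) (F n n) m m' f)
      = blk_mat (D n) (F n n) m m'' (cmp m' g f)"
proof (intro ext)
  fix x z :: "'j \<times> nat"
  obtain j a where x: "x = (j,a)" by fastforce
  obtain k b where z: "z = (k,b)" by fastforce
  show "mat_mult (blk (D n) m') (blk_mat (D n) (F n n) m' m'' g) (blk_mat (D n) (F n n) m m' f) x z
      = blk_mat (D n) (F n n) m m'' (cmp m' g f) x z"
  proof (cases "j \<in> J m'' \<and> k \<in> J m")
    case True
    have U: "cmp m'' (pr m'' j) g \<in> Hom m' n" using True m g by (intro cmp_Hom pr_Hom) auto
    have V: "cmp m f (inc m k) \<in> Hom n m'" using True m f by (intro cmp_Hom inc_Hom) auto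
    have "mat_mult (blk (D n) m') (blk_mat (D n) (F n n) m' m'' g) (blk_mat (D n) (F n n) m m' f) x z =
       (\<Sum>l\<in>J m'. \<Sum>c<D n. F n n (cmp m' (cmp m'' (pr m'' j) g) (inc m' l)) a c * F n n
           (cmp m' (pr m' l) (cmp m f (inc m k))) c b)"
      using True by (simp add: x z mat_mult_apply sum_blk blk_mat_def cmp_assoc)
    also have "\<dots> = F n n (cmp m' (cmp m'' (pr m'' j) g) (cmp m f (inc m k))) a b"
      by (rule linfun_through_generator[OF G(1) G(2) G(2) G(2) m(2) U V])
    also have "\<dots> = blk_mat (D n) (F n n) m m'' (cmp m' g f) x z"
      using True by (simp add: x z blk_mat_def cmp_assoc)
    finally show ?thesis .
  next
    case False
    thus ?thesis by (auto simp: x z mat_mult_apply sum_blk blk_mat_def)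
  qed
qed

text \<open>A functor F, restricted through the splitting: F(V_m) is cut out of F(V_n)^{J m} by the
  row of blocks F(inc m k) and the column of blocks F(pr m j).\<close>

definition blk_row :: "(nat \<Rightarrow> nat \<Rightarrow> 'k tmat \<Rightarrow> 'k nmat) \<Rightarrow> nat
    \<Rightarrow> nat \<Rightarrow> 'k tmat \<Rightarrow> nat \<Rightarrow> ('j \<times> nat) \<Rightarrow> 'k" where
  "blk_row F m' m h = (\<lambda>a (k,b). if k \<in> J m then F n m' (cmp m h (inc m k)) a b else 0)"

definition blk_col :: "(nat \<Rightarrow> nat \<Rightarrow> 'k tmat \<Rightarrow> 'k nmat) \<Rightarrow> nat
    \<Rightarrow> nat \<Rightarrow> 'k tmat \<Rightarrow> ('j \<times> nat) \<Rightarrow> nat \<Rightarrow> 'k" where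
  "blk_col F m m' h = (\<lambda>(j,a) b. if j \<in> J m then F m' n (cmp m (pr m j) h) a b else 0)"

definition blk_diag :: "nat \<Rightarrow> 'k nmat \<Rightarrow> ('j \<times> nat) \<Rightarrow>
    ('j \<times> nat) \<Rightarrow> 'k" where
  "blk_diag m \<phi> = (\<lambda>(j,a) (k,b). if j = k \<and> j \<in> J m then \<phi> a b else 0)"

lemma blk_row_mult_blk_mat:
  assumes G: "linfun Ob D F" "n \<in> Ob" "m' \<in> Ob" and m: "1 \<le> m0" "1 \<le> m"
    and f: "f \<in> Hom m0 m" and h: "h \<in> Hom m m'"
  shows "mat_mult (blk (D n) m) (blk_row F m' m h) (blk_mat (D n) (F n n) m0 m f) = blk_row F m' m0 (cmp m h f)"
proof (intro ext)
  fix a :: nat and z :: "'j \<times> nat"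
  obtain k b where z: "z = (k,b)" by fastforce
  show "mat_mult (blk (D n) m) (blk_row F m' m h) (blk_mat (D n) (F n n) m0 m f) a z
      = blk_row F m' m0 (cmp m h f) a z"
  proof (cases "k \<in> J m0")
    case True
    have V: "cmp m0 f (inc m0 k) \<in> Hom n m" using True m f by (intro cmp_Hom inc_Hom) auto
    have "mat_mult (blk (D n) m) (blk_row F m' m h) (blk_mat (D n) (F n n) m0 m f) a z =
       (\<Sum>l\<in>J m. \<Sum>c<D n. F n m' (cmp m h (inc m l)) a c * F n n
           (cmp m (pr m l) (cmp m0 f (inc m0 k))) c b)"
      using True by (simp add: z mat_mult_apply sum_blk blk_mat_def blk_row_def cmp_assoc)
    also have "\<dots> = F n m' (cmp m h (cmp m0 f (inc m0 k))) a b"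
      by (rule linfun_through_generator[OF G(1) G(2) G(2) G(3) m(2) h V])
    also have "\<dots> = blk_row F m' m0 (cmp m h f) a z"
      using True by (simp add: z blk_row_def cmp_assoc)
    finally show ?thesis .
  next
    case False
    thus ?thesis by (auto simp: z mat_mult_apply sum_blk blk_mat_def blk_row_def)
  qed
qed

lemma blk_mat_mult_blk_col:
  assumes G: "linfun Ob D F" "n \<in> Ob" "m'' \<in> Ob" and m: "1 \<le> m" "1 \<le> m'"
    and f: "f \<in> Hom m m'" and h: "h \<in> Hom m'' m"
  shows "mat_mult (blk (D n) m) (blk_mat (D n) (F n n) m m' f) (blk_col F m m'' h) = blk_col F m' m'' (cmp m f h)"
proof (intro ext)
  fix b :: nat and x :: "'j \<times> nat"
  obtain j a where x: "x = (j,a)" by fastforce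
  show "mat_mult (blk (D n) m) (blk_mat (D n) (F n n) m m' f) (blk_col F m m'' h) x b
      = blk_col F m' m'' (cmp m f h) x b"
  proof (cases "j \<in> J m'")
    case True
    have U: "cmp m' (pr m' j) f \<in> Hom m n" using True m f by (intro cmp_Hom pr_Hom) auto
    have "mat_mult (blk (D n) m) (blk_mat (D n) (F n n) m m' f) (blk_col F m m'' h) x b =
       (\<Sum>l\<in>J m. \<Sum>c<D n. F n n (cmp m (cmp m' (pr m' j) f) (inc m l)) a c * F m'' n
           (cmp m (pr m l) h) c b)"
      using True by (simp add: x mat_mult_apply sum_blk blk_mat_def blk_col_def cmp_assoc)
    also have "\<dots> = F m'' n (cmp m (cmp m' (pr m' j) f) h) a b"
      by (rule linfun_through_generator[OF G(1) G(2) G(3) G(2) m(1) U h])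
    also have "\<dots> = blk_col F m' m'' (cmp m f h) x b"
      using True by (simp add: x blk_col_def cmp_assoc)
    finally show ?thesis .
  next
    case False
    thus ?thesis by (auto simp: x mat_mult_apply sum_blk blk_mat_def blk_col_def)
  qed
qed

lemma blk_col_mult_blk_row:
  assumes G: "linfun Ob D F" "n \<in> Ob" "m'' \<in> Ob" and m: "1 \<le> m" "1 \<le> m0"
    and h: "h \<in> Hom m'' m" and g: "g \<in> Hom m0 m''"
  shows "mat_mult {..<D m''} (blk_col F m m'' h) (blk_row F m'' m0 g) = blk_mat (D n) (F n n) m0 m (cmp m'' h g)"
proof (intro ext)
  fix x z :: "'j \<times> nat"
  obtain j a where x: "x = (j,a)" by fastforce
  obtain k b where z: "z = (k,b)" by fastforce
  show "mat_mult {..<D m''} (blk_col F m m'' h) (blk_row F m'' m0 g) x z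
      = blk_mat (D n) (F n n) m0 m (cmp m'' h g) x z"
  proof (cases "j \<in> J m \<and> k \<in> J m0")
    case True
    have U: "cmp m (pr m j) h \<in> Hom m'' n" using True m h by (intro cmp_Hom pr_Hom) auto
    have V: "cmp m0 g (inc m0 k) \<in> Hom n m''" using True m g by (intro cmp_Hom inc_Hom) auto
    have "mat_mult {..<D m''} (blk_col F m m'' h) (blk_row F m'' m0 g) x z =
        mat_mult {..<D m''} (F m'' n (cmp m (pr m j) h)) (F n m'' (cmp m0 g (inc m0 k))) a b"
      using True by (simp add: x z mat_mult_apply blk_col_def blk_row_def)
    also have "\<dots> = F n n (cmp m'' (cmp m (pr m j) h) (cmp m0 g (inc m0 k))) a b"
      using linfun_comp[OF G(1) G(2) G(3) G(2) V U] by simp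
    also have "\<dots> = blk_mat (D n) (F n n) m0 m (cmp m'' h g) x z"
      using True by (simp add: x z blk_mat_def cmp_assoc)
    finally show ?thesis .
  next
    case False
    thus ?thesis by (auto simp: x z mat_mult_apply blk_mat_def blk_col_def blk_row_def)
  qed
qed

lemma blk_row_mult_blk_col:
  assumes G: "linfun Ob D F" "n \<in> Ob" "m' \<in> Ob" "m'' \<in> Ob" and m: "1 \<le> m"
    and h: "h \<in> Hom m m'" and h': "h' \<in> Hom m'' m"
  shows "mat_mult (blk (D n) m) (blk_row F m' m h) (blk_col F m m'' h') = F m'' m' (cmp m h h')"
proof (intro ext)
  fix a b
  have "mat_mult (blk (D n) m) (blk_row F m' m h) (blk_col F m m'' h') a b =
     (\<Sum>l\<in>J m. \<Sum>c<D n. F n m' (cmp m h (inc m l)) a c * F m'' n (cmp m (pr m l) h') c b)"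
    by (simp add: mat_mult_apply sum_blk blk_row_def blk_col_def)
  also have "\<dots> = F m'' m' (cmp m h h') a b"
    by (rule linfun_through_generator[OF G(1) G(2) G(4) G(3) m h h'])
  finally show "mat_mult (blk (D n) m) (blk_row F m' m h) (blk_col F m m'' h') a b = F m'' m' (cmp m h h') a b" .
qed

lemma linfun_mult_blk_row:
  assumes G: "linfun Ob D F" "n \<in> Ob" "m' \<in> Ob" "m'' \<in> Ob" and m: "1 \<le> m"
    and g: "g \<in> Hom m' m''" and h: "h \<in> Hom m m'"
  shows "mat_mult {..<D m'} (F m' m'' g) (blk_row F m' m h) = blk_row F m'' m (cmp m' g h)"
proof (intro ext)
  fix a :: nat and z :: "'j \<times> nat"
  obtain k b where z: "z = (k,b)" by fastforce
  show "mat_mult {..<D m'} (F m' m'' g) (blk_row F m' m h) a z = blk_row F m'' m (cmp m' g h) a z"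
  proof (cases "k \<in> J m")
    case True
    have V: "cmp m h (inc m k) \<in> Hom n m'" using True m h by (intro cmp_Hom inc_Hom) auto
    have "mat_mult {..<D m'} (F m' m'' g) (blk_row F m' m h) a z
        = mat_mult {..<D m'} (F m' m'' g) (F n m' (cmp m h (inc m k))) a b"
      using True by (simp add: z mat_mult_apply blk_row_def)
    also have "\<dots> = F n m'' (cmp m' g (cmp m h (inc m k))) a b"
      using linfun_comp[OF G(1) G(2) G(3) G(4) V g] by simp
    also have "\<dots> = blk_row F m'' m (cmp m' g h) a z"
      using True by (simp add: z blk_row_def cmp_assoc)
    finally show ?thesis .
  next
    case False
    thus ?thesis by (auto simp: z mat_mult_apply blk_row_def)
  qed
qed

lemma blk_col_mult_linfun:
  assumes G: "linfun Ob D F" "n \<in> Ob" "m' \<in> Ob" "m'' \<in> Ob" and m: "1 \<le> m"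
    and h: "h \<in> Hom m' m" and g: "g \<in> Hom m'' m'"
  shows "mat_mult {..<D m'} (blk_col F m m' h) (F m'' m' g) = blk_col F m m'' (cmp m' h g)"
proof (intro ext)
  fix b :: nat and x :: "'j \<times> nat"
  obtain j a where x: "x = (j,a)" by fastforce
  show "mat_mult {..<D m'} (blk_col F m m' h) (F m'' m' g) x b = blk_col F m m'' (cmp m' h g) x b"
  proof (cases "j \<in> J m")
    case True
    have U: "cmp m (pr m j) h \<in> Hom m' n" using True m h by (intro cmp_Hom pr_Hom) auto
    have "mat_mult {..<D m'} (blk_col F m m' h) (F m'' m' g) x b
        = mat_mult {..<D m'} (F m' n (cmp m (pr m j) h)) (F m'' m' g) a b"
      using True by (simp add: x mat_mult_apply blk_col_def)
    also have "\<dots> = F m'' n (cmp m' (cmp m (pr m j) h) g) a b"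
      using linfun_comp[OF G(1) G(4) G(3) G(2) g U] by simp
    also have "\<dots> = blk_col F m m'' (cmp m' h g) x b"
      using True by (simp add: x blk_col_def cmp_assoc)
    finally show ?thesis .
  next
    case False
    thus ?thesis by (auto simp: x mat_mult_apply blk_col_def)
  qed
qed

definition nattrans :: "nat set \<Rightarrow> (nat \<Rightarrow> nat) \<Rightarrow>
    (nat \<Rightarrow> nat \<Rightarrow> 'k tmat \<Rightarrow> 'k nmat) \<Rightarrow> (nat \<Rightarrow> nat)
    \<Rightarrow> (nat \<Rightarrow> nat \<Rightarrow> 'k tmat \<Rightarrow> 'k nmat) \<Rightarrow>
    (nat \<Rightarrow> 'k nmat) \<Rightarrow> bool" where
  "nattrans Ob D F D' F' \<theta>
      \<longleftrightarrow> (\<forall>m\<in>Ob. mat_in {..<D' m} {..<D m} (\<theta> m)) \<and>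
     (\<forall>m\<in>Ob. \<forall>m'\<in>Ob. \<forall>f\<in>Hom m m'. mat_mult {..<D m'} (\<theta> m')
         (F m m' f) = mat_mult {..<D' m} (F' m m' f) (\<theta> m))"

lemma nattrans_mat_in: "nattrans Ob D F D' F' \<theta> \<Longrightarrow> m \<in> Ob
    \<Longrightarrow> mat_in {..<D' m} {..<D m} (\<theta> m)"
  by (simp add: nattrans_def)

lemma nattrans_natural: "nattrans Ob D F D' F' \<theta> \<Longrightarrow> m \<in> Ob
    \<Longrightarrow> m' \<in> Ob \<Longrightarrow> f \<in> Hom m m' \<Longrightarrow>
   mat_mult {..<D m'} (\<theta> m') (F m m' f) = mat_mult {..<D' m} (F' m m' f) (\<theta> m)"
  by (simp add: nattrans_def)

lemma mat_mult_blk_diag_left: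
  fixes X :: "'j \<times> nat \<Rightarrow> 'z \<Rightarrow> 'k"
  shows "mat_mult (blk N m) (blk_diag m \<phi>) X
    = (\<lambda>(j,a) z. if j \<in> J m then \<Sum>c<N. \<phi> a c * X (j,c) z else 0)"
proof (intro ext)
  fix x :: "'j \<times> nat" and z :: 'z
  obtain j a where x: "x = (j,a)" by fastforce
  have "mat_mult (blk N m) (blk_diag m \<phi>) X x z
      = (\<Sum>l\<in>J m. \<Sum>c<N. (if j = l \<and> j \<in> J m then \<phi> a c else 0) * X (l, c) z)"
    by (simp add: x mat_mult_apply sum_blk blk_diag_def)
  also have "\<dots> = (\<Sum>l\<in>J m. if j = l then (\<Sum>c<N. \<phi> a c * X (l,c) z) else 0)"
    by (rule sum.cong) auto
  also have "\<dots> = (if j \<in> J m then \<Sum>c<N. \<phi> a c * X (j,c) z else 0)"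
    by (simp add: sum.delta finite_J)
  finally show "mat_mult (blk N m) (blk_diag m \<phi>) X x z
      = (\<lambda>(j,a) z. if j \<in> J m then \<Sum>c<N. \<phi> a c * X (j,c) z else 0) x z"
    by (simp add: x)
qed

lemma mat_mult_blk_diag_right:
  fixes X :: "'x \<Rightarrow> 'j \<times> nat \<Rightarrow> 'k"
  shows "mat_mult (blk N m) X (blk_diag m \<phi>)
    = (\<lambda>x (k,b). if k \<in> J m then \<Sum>c<N. X x (k,c) * \<phi> c b else 0)"
proof (intro ext)
  fix z :: "'j \<times> nat" and x :: 'x
  obtain k b where z: "z = (k,b)" by fastforce
  have "mat_mult (blk N m) X (blk_diag m \<phi>) x z
      = (\<Sum>l\<in>J m. \<Sum>c<N. X x (l, c) * (if l = k \<and> l \<in> J m then \<phi> c b else 0))"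
    by (simp add: z mat_mult_apply sum_blk blk_diag_def)
  also have "\<dots> = (\<Sum>l\<in>J m. if k = l then (\<Sum>c<N. X x (l,c) * \<phi> c b) else 0)"
    by (rule sum.cong) auto
  also have "\<dots> = (if k \<in> J m then \<Sum>c<N. X x (k,c) * \<phi> c b else 0)"
    by (simp add: sum.delta finite_J)
  finally show "mat_mult (blk N m) X (blk_diag m \<phi>) x z
      = (\<lambda>x (k,b). if k \<in> J m then \<Sum>c<N. X x (k,c) * \<phi> c b else 0) x z"
    by (simp add: z)
qed

lemma blk_diag_mat_in: "mat_in {..<N'} {..<N} \<phi>
    \<Longrightarrow> mat_in (blk N' m) (blk N m) (blk_diag m \<phi>)"
  by (auto simp: mat_in_def blk_diag_def blk_def split: if_splits)

lemma blk_diag_id: "blk_diag m (mat_id {..<N}) = mat_id (blk N m)"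
  by (auto simp: blk_diag_def mat_id_def blk_def fun_eq_iff)

lemma blk_diag_mult: "mat_mult (blk N' m) (blk_diag m \<psi>) (blk_diag m \<phi>)
    = blk_diag m (mat_mult {..<N'} \<psi> \<phi>)"
  unfolding mat_mult_blk_diag_left by (auto simp: blk_diag_def mat_mult_apply fun_eq_iff intro!: sum.neutral)

lemma blk_diag_blk_mat_commute:
  assumes G: "linfun Ob D F" "linfun Ob D' F'" "n \<in> Ob" and th: "nattrans Ob D F D' F' \<theta>"
    and m: "1 \<le> m" "1 \<le> m'" and f: "f \<in> Hom m m'"
  shows "mat_mult (blk (D n) m') (blk_diag m' (\<theta> n)) (blk_mat (D n) (F n n) m m' f)
      = mat_mult (blk (D' n) m) (blk_mat (D' n) (F' n n) m m' f) (blk_diag m (\<theta> n))"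
proof (intro ext)
  fix x z :: "'j \<times> nat"
  obtain j a where x: "x = (j,a)" by fastforce
  obtain k b where z: "z = (k,b)" by fastforce
  show "mat_mult (blk (D n) m') (blk_diag m' (\<theta> n)) (blk_mat (D n) (F n n) m m' f) x z
      = mat_mult (blk (D' n) m) (blk_mat (D' n) (F' n n) m m' f) (blk_diag m (\<theta> n)) x z"
  proof (cases "j \<in> J m' \<and> k \<in> J m")
    case True
    have X: "cmp m' (pr m' j) (cmp m f (inc m k)) \<in> Hom n n" using True m f by (intro pr_cmp_inc_Hom) auto
    show ?thesis using True nattrans_natural[OF th G(3) G(3) X]
      by (simp add: x z mat_mult_blk_diag_left mat_mult_blk_diag_right blk_mat_def mat_mult_apply fun_eq_iff)
  next
    case False
    thus ?thesis by (auto simp: x z mat_mult_blk_diag_left mat_mult_blk_diag_right blk_mat_def)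
  qed
qed

lemma blk_row_blk_diag_commute:
  assumes G: "linfun Ob D F" "linfun Ob D' F'" "n \<in> Ob" "m' \<in> Ob" and th: "nattrans Ob D F D' F' \<theta>"
    and m: "1 \<le> m" and h: "h \<in> Hom m m'"
  shows "mat_mult (blk (D' n) m) (blk_row F' m' m h) (blk_diag m (\<theta> n))
      = mat_mult {..<D m'} (\<theta> m') (blk_row F m' m h)"
proof (intro ext)
  fix a :: nat and z :: "'j \<times> nat"
  obtain k b where z: "z = (k,b)" by fastforce
  show "mat_mult (blk (D' n) m) (blk_row F' m' m h) (blk_diag m (\<theta> n)) a z
      = mat_mult {..<D m'} (\<theta> m') (blk_row F m' m h) a z"
  proof (cases "k \<in> J m")
    case True
    have X: "cmp m h (inc m k) \<in> Hom n m'" using True m h by (intro cmp_Hom inc_Hom) auto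
    show ?thesis using True nattrans_natural[OF th G(3) G(4) X]
      by (simp add: z mat_mult_blk_diag_right blk_row_def mat_mult_apply fun_eq_iff)
  next
    case False
    thus ?thesis by (auto simp: z mat_mult_blk_diag_right blk_row_def mat_mult_apply)
  qed
qed

lemma blk_row_mat_in:
  assumes G: "linfun Ob D F" "n \<in> Ob" "m' \<in> Ob" and m: "1 \<le> m" and h: "h \<in> Hom m m'"
  shows "mat_in {..<D m'} (blk (D n) m) (blk_row F m' m h)"
  unfolding mat_in_def
proof (clarify)
  fix a k b assume nz: "blk_row F m' m h a (k, b) \<noteq> 0"
  hence k: "k \<in> J m" by (auto simp: blk_row_def split: if_splits)
  have X: "cmp m h (inc m k) \<in> Hom n m'" using k m h by (intro cmp_Hom inc_Hom) auto
  have "F n m' (cmp m h (inc m k)) a b \<noteq> 0" using nz k by (simp add: blk_row_def)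
  with linfun_mat_in[OF G(1) G(2) G(3) X] show "a \<in> {..<D m'} \<and> (k, b) \<in> blk (D n) m"
    using k by (auto simp: mat_in_def blk_def)
qed

lemma blk_col_mat_in:
  assumes G: "linfun Ob D F" "n \<in> Ob" "m' \<in> Ob" and m: "1 \<le> m" and h: "h \<in> Hom m' m"
  shows "mat_in (blk (D n) m) {..<D m'} (blk_col F m m' h)"
  unfolding mat_in_def
proof (clarify)
  fix j a b assume nz: "blk_col F m m' h (j, a) b \<noteq> 0"
  hence j: "j \<in> J m" by (auto simp: blk_col_def split: if_splits)
  have X: "cmp m (pr m j) h \<in> Hom m' n" using j m h by (intro cmp_Hom pr_Hom) auto
  have "F m' n (cmp m (pr m j) h) a b \<noteq> 0" using nz j by (simp add: blk_col_def)
  with linfun_mat_in[OF G(1) G(3) G(2) X] show "(j, a) \<in> blk (D n) m \<and> b \<in> {..<D m'}"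
    using j by (auto simp: mat_in_def blk_def)
qed

lemma blk_mat_add:
  assumes G: "linfun Ob D F" "n \<in> Ob" and m: "1 \<le> m" "1 \<le> m'" and f: "f \<in> Hom m m'"
    and g: "g \<in> Hom m m'"
  shows "blk_mat (D n) (F n n) m m' (\<lambda>x y. f x y + g x y)
      = (\<lambda>x y. blk_mat (D n) (F n n) m m' f x y + blk_mat (D n) (F n n) m m' g x y)"
proof (intro ext)
  fix x z :: "'j \<times> nat"
  obtain j a where x: "x = (j,a)" by fastforce
  obtain k b where z: "z = (k,b)" by fastforce
  show "blk_mat (D n) (F n n) m m' (\<lambda>x y. f x y + g x y) x z
      = blk_mat (D n) (F n n) m m' f x z + blk_mat (D n) (F n n) m m' g x z"
  proof (cases "j \<in> J m' \<and> k \<in> J m")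
    case True
    have "cmp m' (pr m' j) (cmp m (\<lambda>x y. f x y + g x y) (inc m k)) =
       (\<lambda>x y. cmp m' (pr m' j) (cmp m f (inc m k)) x y + cmp m' (pr m' j) (cmp m g (inc m k)) x y)"
      by (simp add: mat_mult_add_left mat_mult_add_right)
    thus ?thesis using True linfun_add[OF G(1) G(2) G(2) pr_cmp_inc_Hom[OF m _ _ f] pr_cmp_inc_Hom[OF m _ _ g]]
      by (simp add: x z blk_mat_def)
  next
    case False thus ?thesis by (auto simp: x z blk_mat_def)
  qed
qed

lemma blk_mat_scal:
  assumes G: "linfun Ob D F" "n \<in> Ob" and m: "1 \<le> m" "1 \<le> m'" and f: "f \<in> Hom m m'"
  shows "blk_mat (D n) (F n n) m m' (\<lambda>x y. c * f x y) = (\<lambda>x y. c * blk_mat (D n) (F n n) m m' f x y)"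
proof (intro ext)
  fix x z :: "'j \<times> nat"
  obtain j a where x: "x = (j,a)" by fastforce
  obtain k b where z: "z = (k,b)" by fastforce
  show "blk_mat (D n) (F n n) m m' (\<lambda>x y. c * f x y) x z = c * blk_mat (D n) (F n n) m m' f x z"
  proof (cases "j \<in> J m' \<and> k \<in> J m")
    case True
    have "cmp m' (pr m' j) (cmp m (\<lambda>x y. c * f x y) (inc m k))
        = (\<lambda>x y. c * cmp m' (pr m' j) (cmp m f (inc m k)) x y)"
      by (simp add: mat_mult_scal_left mat_mult_scal_right)
    thus ?thesis using True linfun_scal[OF G(1) G(2) G(2) pr_cmp_inc_Hom[OF m _ _ f]]
      by (simp add: x z blk_mat_def)
  next
    case False thus ?thesis by (auto simp: x z blk_mat_def)
  qed
qed

definition blk_idem :: "nat \<Rightarrow> ('k tmat \<Rightarrow> 'k nmat) \<Rightarrow> nat \<Rightarrow>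
    ('j \<times> nat) \<Rightarrow> ('j \<times> nat) \<Rightarrow> 'k" where
  "blk_idem N \<rho> m = blk_mat N \<rho> m m (tid d m)"

definition splitting :: "nat \<Rightarrow> ('k tmat \<Rightarrow> 'k nmat) \<Rightarrow> nat \<Rightarrow> nat
    \<times> ('j \<times> nat \<Rightarrow> nat \<Rightarrow> 'k) \<times>
    (nat \<Rightarrow> 'j \<times> nat \<Rightarrow> 'k)" where
  "splitting N \<rho> m = (SOME (r, A, B). idem_split (blk N m) r A B (blk_idem N \<rho> m))"

definition img_dim :: "nat \<Rightarrow> ('k tmat \<Rightarrow> 'k nmat) \<Rightarrow> nat \<Rightarrow> nat" where
  "img_dim N \<rho> m = fst (splitting N \<rho> m)"

definition img_incl :: "nat \<Rightarrow> ('k tmat \<Rightarrow> 'k nmat) \<Rightarrow> nat \<Rightarrow> 'j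
    \<times> nat \<Rightarrow> nat \<Rightarrow> 'k" where
  "img_incl N \<rho> m = fst (snd (splitting N \<rho> m))"

definition img_proj :: "nat \<Rightarrow> ('k tmat \<Rightarrow> 'k nmat) \<Rightarrow> nat \<Rightarrow> nat
    \<Rightarrow> 'j \<times> nat \<Rightarrow> 'k" where
  "img_proj N \<rho> m = snd (snd (splitting N \<rho> m))"

lemma blk_idem_mat_in:
  assumes G: "linfun Ob D F" "n \<in> Ob" and m: "1 \<le> m"
  shows "mat_in (blk (D n) m) (blk (D n) m) (blk_idem (D n) (F n n) m)"
  unfolding blk_idem_def by (rule blk_mat_in[OF G m m CHom_tid])

lemma blk_mat_mult_blk_idem:
  assumes G: "linfun Ob D F" "n \<in> Ob" and m: "1 \<le> m" "1 \<le> m'"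
    and f: "f \<in> Hom m m'"
  shows "mat_mult (blk (D n) m) (blk_mat (D n) (F n n) m m' f) (blk_idem (D n) (F n n) m)
      = blk_mat (D n) (F n n) m m' f"
  unfolding blk_idem_def using blk_mat_mult[OF G m(1) m(1) m(2) CHom_tid f] mat_mult_tid_right[OF f] by simp

lemma blk_idem_mult_blk_mat:
  assumes G: "linfun Ob D F" "n \<in> Ob" and m: "1 \<le> m" "1 \<le> m'"
    and f: "f \<in> Hom m m'"
  shows "mat_mult (blk (D n) m') (blk_idem (D n) (F n n) m') (blk_mat (D n) (F n n) m m' f)
      = blk_mat (D n) (F n n) m m' f"
  unfolding blk_idem_def using blk_mat_mult[OF G m(1) m(2) m(2) f CHom_tid] mat_mult_tid_left[OF f] by simp

lemma blk_idem_idem: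
  assumes G: "linfun Ob D F" "n \<in> Ob" and m: "1 \<le> m"
  shows "mat_mult (blk (D n) m) (blk_idem (D n) (F n n) m) (blk_idem (D n) (F n n) m) = blk_idem (D n) (F n n) m"
  using blk_mat_mult_blk_idem[OF G m m CHom_tid] by (simp add: blk_idem_def)

lemma idem_split_splitting:
  assumes G: "linfun Ob D F" "n \<in> Ob" and m: "1 \<le> m"
  shows "idem_split (blk (D n) m) (img_dim (D n) (F n n) m) (img_incl (D n) (F n n) m) (img_proj (D n) (F n n) m)
     (blk_idem (D n) (F n n) m)"
proof -
  obtain r A B where split: "idem_split (blk (D n) m) r A B (blk_idem (D n) (F n n) m)"
    using idempotent_splits[OF finite_blk blk_idem_mat_in[OF G m] blk_idem_idem[OF G m]] by blast
  have "case splitting (D n) (F n n) m of (r, A, B) \<Rightarrow> idem_split (blk (D n) m) r A B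
      (blk_idem (D n) (F n n) m)"
    unfolding splitting_def by (rule someI_ex) (use split in blast)
  thus ?thesis by (simp add: img_dim_def img_incl_def img_proj_def split: prod.splits)
qed

lemma splitting_props:
  assumes G: "linfun Ob D F" "n \<in> Ob" and m: "1 \<le> m"
  shows "mat_in (blk (D n) m) {..<img_dim (D n) (F n n) m} (img_incl (D n) (F n n) m)"
    "mat_in {..<img_dim (D n) (F n n) m} (blk (D n) m) (img_proj (D n) (F n n) m)"
    "mat_mult {..<img_dim (D n) (F n n) m} (img_incl (D n) (F n n) m) (img_proj (D n) (F n n) m)
        = blk_idem (D n) (F n n) m"
    "mat_mult (blk (D n) m) (img_proj (D n) (F n n) m) (img_incl (D n) (F n n) m)
        = mat_id {..<img_dim (D n) (F n n) m}"
    "mat_mult (blk (D n) m) (blk_idem (D n) (F n n) m) (img_incl (D n) (F n n) m) = img_incl (D n) (F n n) m"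
    "mat_mult (blk (D n) m) (img_proj (D n) (F n n) m) (blk_idem (D n) (F n n) m) = img_proj (D n) (F n n) m"
  using idem_split_splitting[OF G m] idem_split_absorb[OF idem_split_splitting[OF G m] finite_blk]
  by (auto simp: idem_split_def)

definition ind_fun :: "nat \<Rightarrow> ('k tmat \<Rightarrow> 'k nmat) \<Rightarrow> nat \<Rightarrow> nat
    \<Rightarrow> 'k tmat \<Rightarrow> 'k nmat" where
  "ind_fun N \<rho> m m' f = mat_mult (blk N m') (img_proj N \<rho> m')
      (mat_mult (blk N m) (blk_mat N \<rho> m m' f) (img_incl N \<rho> m))"

lemma linfun_ind_fun:
  assumes G: "linfun Ob D F" "n \<in> Ob"
  shows "linfun {m. 1 \<le> m} (img_dim (D n) (F n n)) (ind_fun (D n) (F n n))"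
  unfolding linfun_def
proof (intro conjI ballI allI)
  fix a b :: nat and f :: "'k tmat" assume a: "a \<in> {m. 1 \<le> m}" and b: "b \<in> {m. 1 \<le> m}"
    and f: "f \<in> Hom a b"
  show "mat_in {..<img_dim (D n) (F n n) b} {..<img_dim (D n) (F n n) a} (ind_fun (D n) (F n n) a b f)"
    unfolding ind_fun_def using a b
    by (intro mat_in_mult[OF splitting_props(2)[OF G]
        mat_in_mult[OF blk_mat_in[OF G _ _ f] splitting_props(1)[OF G]]]) auto
  fix g c assume g: "g \<in> Hom a b"
  show "ind_fun (D n) (F n n) a b (\<lambda>x y. f x y + g x y)
      = (\<lambda>i j. ind_fun (D n) (F n n) a b f i j + ind_fun (D n) (F n n) a b g i j)"
    using a b by (simp add: ind_fun_def blk_mat_add[OF G _ _ f g] mat_mult_add_left mat_mult_add_right)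
  show "ind_fun (D n) (F n n) a b (\<lambda>x y. c * f x y) = (\<lambda>i j. c * ind_fun (D n) (F n n) a b f i j)"
    using a b by (simp add: ind_fun_def blk_mat_scal[OF G _ _ f] mat_mult_scal_left mat_mult_scal_right)
next
  fix a b c :: nat and f g :: "'k tmat" assume a: "a \<in> {m. 1 \<le> m}" and b: "b \<in> {m. 1 \<le> m}" and
      c: "c \<in> {m. 1 \<le> m}"
    and f: "f \<in> Hom a b" and g: "g \<in> Hom b c"
  have a1: "1 \<le> a" and b1: "1 \<le> b" and c1: "1 \<le> c" using a b c by auto
  note fsb = splitting_props[OF G b1]
  show "ind_fun (D n) (F n n) a c (cmp b g f)
      = mat_mult {..<img_dim (D n) (F n n) b} (ind_fun (D n) (F n n) b c g) (ind_fun (D n) (F n n) a b f)"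
    by (simp add: ind_fun_def mat_mult_assoc finite_blk mat_mult_reassoc[OF fsb(3)]
        mat_mult_reassoc[OF blk_mat_mult_blk_idem[OF G b1 c1 g]]
        mat_mult_reassoc[OF blk_mat_mult[OF G a1 b1 c1 f g]])
next
  fix a :: nat assume a: "a \<in> {m. 1 \<le> m}"
  hence a1: "1 \<le> a" by simp
  show "ind_fun (D n) (F n n) a a (tid d a) = mat_id {..<img_dim (D n) (F n n) a}"
    by (simp add: ind_fun_def blk_idem_def[symmetric] splitting_props(5)[OF G a1] splitting_props(4)[OF G a1])
qed

definition unit_mat :: "(nat \<Rightarrow> nat) \<Rightarrow>
    (nat \<Rightarrow> nat \<Rightarrow> 'k tmat \<Rightarrow> 'k nmat) \<Rightarrow> nat \<Rightarrow> 'k nmat" where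
  "unit_mat D F m = mat_mult (blk (D n) m) (blk_row F m m (tid d m)) (img_incl (D n) (F n n) m)"

definition unit_inv_mat :: "(nat \<Rightarrow> nat) \<Rightarrow>
    (nat \<Rightarrow> nat \<Rightarrow> 'k tmat \<Rightarrow> 'k nmat) \<Rightarrow> nat \<Rightarrow> 'k nmat" where
  "unit_inv_mat D F m = mat_mult (blk (D n) m) (img_proj (D n) (F n n) m) (blk_col F m m (tid d m))"

lemma cmp_tid: "cmp m (tid d m) (tid d m) = tid d m"
  by (rule mat_mult_tid_left[OF CHom_tid])

lemma blk_row_col_tid:
  assumes G: "linfun Ob D F" "n \<in> Ob" "m \<in> Ob" and m: "1 \<le> m"
  shows "mat_mult (blk (D n) m) (blk_idem (D n) (F n n) m) (blk_col F m m (tid d m)) = blk_col F m m (tid d m)"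
    "mat_mult (blk (D n) m) (blk_row F m m (tid d m)) (blk_idem (D n) (F n n) m) = blk_row F m m (tid d m)"
    "mat_mult {..<D m} (blk_col F m m (tid d m)) (blk_row F m m (tid d m)) = blk_idem (D n) (F n n) m"
    "mat_mult (blk (D n) m) (blk_row F m m (tid d m)) (blk_col F m m (tid d m)) = mat_id {..<D m}"
  using blk_mat_mult_blk_col[OF G m m CHom_tid CHom_tid] blk_row_mult_blk_mat[OF G m m CHom_tid CHom_tid]
      blk_col_mult_blk_row[OF G(1,2,3) m m CHom_tid CHom_tid]
    blk_row_mult_blk_col[OF G(1,2,3,3) m CHom_tid CHom_tid] linfun_id[OF G(1,3)]
  by (simp_all add: cmp_tid blk_idem_def)

lemma unit_mat_in:
  assumes G: "linfun Ob D F" "n \<in> Ob" "m \<in> Ob" and m: "1 \<le> m"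
  shows "mat_in {..<D m} {..<img_dim (D n) (F n n) m} (unit_mat D F m)"
  unfolding unit_mat_def by (rule mat_in_mult[OF blk_row_mat_in[OF G m CHom_tid] splitting_props(1)[OF G(1,2) m]])

lemma unit_inv_mat_in:
  assumes G: "linfun Ob D F" "n \<in> Ob" "m \<in> Ob" and m: "1 \<le> m"
  shows "mat_in {..<img_dim (D n) (F n n) m} {..<D m} (unit_inv_mat D F m)"
  unfolding unit_inv_mat_def by (rule mat_in_mult[OF splitting_props(2)[OF G(1,2) m] blk_col_mat_in[OF G m CHom_tid]])

lemma unit_mult_unit_inv:
  assumes G: "linfun Ob D F" "n \<in> Ob" "m \<in> Ob" and m: "1 \<le> m"
  shows "mat_mult {..<img_dim (D n) (F n n) m} (unit_mat D F m) (unit_inv_mat D F m) = mat_id {..<D m}"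
  using blk_row_col_tid[OF G m] splitting_props[OF G(1,2) m]
  by (simp add: unit_mat_def unit_inv_mat_def mat_mult_assoc finite_blk
      mat_mult_reassoc[OF splitting_props(3)[OF G(1,2) m]])

lemma unit_inv_mult_unit:
  assumes G: "linfun Ob D F" "n \<in> Ob" "m \<in> Ob" and m: "1 \<le> m"
  shows "mat_mult {..<D m} (unit_inv_mat D F m) (unit_mat D F m) = mat_id {..<img_dim (D n) (F n n) m}"
  using blk_row_col_tid[OF G m] splitting_props[OF G(1,2) m] splitting_props(5)[OF G(1,2) m]
  by (simp add: unit_mat_def unit_inv_mat_def mat_mult_assoc finite_blk
      mat_mult_reassoc[OF blk_row_col_tid(3)[OF G m]])

lemma unit_natural:
  assumes G: "linfun Ob D F" "n \<in> Ob" "m \<in> Ob" "m' \<in> Ob" and m: "1 \<le> m" "1 \<le> m'"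
    and f: "f \<in> Hom m m'"
  shows "mat_mult {..<img_dim (D n) (F n n) m'} (unit_mat D F m') (ind_fun (D n) (F n n) m m' f)
      = mat_mult {..<D m} (F m m' f) (unit_mat D F m)"
proof -
  have row_blk_mat: "mat_mult (blk (D n) m') (blk_row F m' m' (tid d m')) (blk_mat (D n) (F n n) m m' f)
      = blk_row F m' m f"
    using blk_row_mult_blk_mat[OF G(1,2,4) m(1,2) f CHom_tid] mat_mult_tid_left[OF f] by simp
  have F_blk_row: "mat_mult {..<D m} (F m m' f) (blk_row F m m (tid d m)) = blk_row F m' m f"
    using linfun_mult_blk_row[OF G(1,2,3,4) m(1) f CHom_tid] mat_mult_tid_right[OF f] by simp
  show ?thesis
    by (simp add: unit_mat_def ind_fun_def mat_mult_assoc finite_blk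
        mat_mult_reassoc[OF splitting_props(3)[OF G(1,2) m(2)]]
      mat_mult_reassoc[OF blk_row_col_tid(2)[OF G(1,2,4) m(2)]] mat_mult_reassoc[OF row_blk_mat]
          mat_mult_reassoc[OF F_blk_row])
qed

lemma unit_inv_natural:
  assumes G: "linfun Ob D F" "n \<in> Ob" "m \<in> Ob" "m' \<in> Ob" and m: "1 \<le> m" "1
    \<le> m'"
    and f: "f \<in> Hom m m'"
  shows "mat_mult {..<img_dim (D n) (F n n) m} (ind_fun (D n) (F n n) m m' f) (unit_inv_mat D F m)
      = mat_mult {..<D m'} (unit_inv_mat D F m') (F m m' f)"
proof -
  have blk_mat_col: "mat_mult (blk (D n) m) (blk_mat (D n) (F n n) m m' f) (blk_col F m m (tid d m))
      = blk_col F m' m f"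
    using blk_mat_mult_blk_col[OF G(1,2,3) m(1,2) f CHom_tid] mat_mult_tid_right[OF f] by simp
  have blk_col_F: "mat_mult {..<D m'} (blk_col F m' m' (tid d m')) (F m m' f) = blk_col F m' m f"
    using blk_col_mult_linfun[OF G(1,2,4,3) m(2) CHom_tid f] mat_mult_tid_left[OF f] by simp
  show ?thesis
    by (simp add: unit_inv_mat_def ind_fun_def mat_mult_assoc finite_blk
        mat_mult_reassoc[OF splitting_props(3)[OF G(1,2) m(1)]]
      mat_mult_reassoc[OF blk_row_col_tid(1)[OF G(1,2,3) m(1)]] blk_row_col_tid(1)[OF G(1,2,3) m(1)] blk_mat_col
          blk_col_F)
qed

definition ind_map :: "nat \<Rightarrow> ('k tmat \<Rightarrow> 'k nmat) \<Rightarrow> nat \<Rightarrow>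
    ('k tmat \<Rightarrow> 'k nmat) \<Rightarrow> 'k nmat \<Rightarrow> nat \<Rightarrow> 'k nmat" where
  "ind_map N \<rho> N' \<rho>' \<phi> m
      = (if 1 \<le> m then mat_mult (blk N' m) (img_proj N' \<rho>' m)
      (mat_mult (blk N m) (blk_diag m \<phi>) (img_incl N \<rho> m)) else (\<lambda>i j. 0))"

lemma ind_map_mat_in:
  assumes G: "linfun Ob D F" "linfun Ob D' F'" "n \<in> Ob" and th: "nattrans Ob D F D' F'
    \<theta>"
  shows "mat_in {..<img_dim (D' n) (F' n n) m} {..<img_dim (D n) (F n n) m}
      (ind_map (D n) (F n n) (D' n) (F' n n) (\<theta> n) m)"
proof (cases "1 \<le> m")
  case True
  thus ?thesis unfolding ind_map_def
    by (simp add: mat_in_mult[OF splitting_props(2)[OF G(2,3) True]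
        mat_in_mult[OF blk_diag_mat_in[OF nattrans_mat_in[OF th G(3)]] splitting_props(1)[OF G(1,3) True]]])
next
  case False thus ?thesis by (simp add: ind_map_def mat_in_def)
qed

lemma ind_map_natural:
  assumes G: "linfun Ob D F" "linfun Ob D' F'" "n \<in> Ob" and th: "nattrans Ob D F D' F'
    \<theta>"
    and m: "1 \<le> m" "1 \<le> m'" and f: "f \<in> Hom m m'"
  shows "mat_mult {..<img_dim (D n) (F n n) m'} (ind_map (D n) (F n n) (D' n) (F' n n) (\<theta> n) m')
      (ind_fun (D n) (F n n) m m' f)
       = mat_mult {..<img_dim (D' n) (F' n n) m} (ind_fun (D' n) (F' n n) m m' f)
           (ind_map (D n) (F n n) (D' n) (F' n n) (\<theta> n) m)"
  using m
  by (simp add: ind_map_def ind_fun_def mat_mult_assoc finite_blk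
      mat_mult_reassoc[OF splitting_props(3)[OF G(1,3) m(2)]]
      mat_mult_reassoc[OF splitting_props(3)[OF G(2,3) m(1)]]
          mat_mult_reassoc[OF blk_idem_mult_blk_mat[OF G(1,3) m f]]
      mat_mult_reassoc[OF blk_mat_mult_blk_idem[OF G(2,3) m f]]
          mat_mult_reassoc[OF blk_diag_blk_mat_commute[OF G th m f]])

lemma ind_map_id:
  assumes G: "linfun Ob D F" "n \<in> Ob" and m: "1 \<le> m"
  shows "ind_map (D n) (F n n) (D n) (F n n) (mat_id {..<D n}) m = mat_id {..<img_dim (D n) (F n n) m}"
  using m splitting_props[OF G m]
  by (simp add: ind_map_def blk_diag_id mat_mult_id_left[OF finite_blk splitting_props(1)[OF G m]])

lemma ind_map_comp:
  assumes G: "linfun Ob D F" "linfun Ob D' F'" "linfun Ob D'' F''" "n \<in> Ob"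
    and th: "nattrans Ob D F D' F' \<theta>" and ps: "nattrans Ob D' F' D'' F'' \<psi>" and m: "1 \<le> m"
  shows "mat_mult {..<img_dim (D' n) (F' n n) m} (ind_map (D' n) (F' n n) (D'' n) (F'' n n) (\<psi> n) m)
      (ind_map (D n) (F n n) (D' n) (F' n n) (\<theta> n) m)
     = ind_map (D n) (F n n) (D'' n) (F'' n n) (mat_mult {..<D' n} (\<psi> n) (\<theta> n)) m"
proof -
  have idem_diag_commute: "mat_mult (blk (D' n) m) (blk_idem (D' n) (F' n n) m) (blk_diag m (\<theta> n))
      = mat_mult (blk (D n) m) (blk_diag m (\<theta> n)) (blk_idem (D n) (F n n) m)"
    using blk_diag_blk_mat_commute[OF G(1,2,4) th m m CHom_tid] by (simp add: blk_idem_def)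
  show ?thesis
    using m
    by (simp add: ind_map_def mat_mult_assoc finite_blk mat_mult_reassoc[OF splitting_props(3)[OF G(2,4) m]]
      mat_mult_reassoc[OF idem_diag_commute] splitting_props(5)[OF G(1,4) m] mat_mult_reassoc[OF blk_diag_mult])
qed

lemma unit_natural_in_functor:
  assumes G: "linfun Ob D F" "linfun Ob D' F'" "n \<in> Ob" "m \<in> Ob"
    and th: "nattrans Ob D F D' F' \<theta>" and m: "1 \<le> m"
  shows "mat_mult {..<img_dim (D' n) (F' n n) m} (unit_mat D' F' m)
      (ind_map (D n) (F n n) (D' n) (F' n n) (\<theta> n) m) = mat_mult {..<D m} (\<theta> m) (unit_mat D F m)"
  using m
  by (simp add: unit_mat_def ind_map_def mat_mult_assoc finite_blk
      mat_mult_reassoc[OF splitting_props(3)[OF G(2,3) m]]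
      mat_mult_reassoc[OF blk_row_col_tid(2)[OF G(2,3,4) m]]
          mat_mult_reassoc[OF blk_row_blk_diag_commute[OF G(1,2,3,4) th m CHom_tid]])

lemma is_linfunctor_iff: "is_linfunctor d Q q (D, F) \<longleftrightarrow> linfun {m. 1 \<le> m} D F"
  unfolding is_linfunctor_def linfun_def nmat_in_iff_mat_in tmul_eq_mat_mult nmul_eq_mat_mult nid_eq_mat_id by auto

lemma is_Smodule_iff: "is_Smodule d Q q n (N, \<rho>)
    \<longleftrightarrow> linfun {n} (\<lambda>_. N) (\<lambda>_ _. \<rho>)"
  unfolding is_Smodule_def linfun_def nmat_in_iff_mat_in tmul_eq_mat_mult nmul_eq_mat_mult nid_eq_mat_id by auto

lemma is_nattrans_iff: "is_nattrans d Q q (D, F) (D', F') \<theta>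
    \<longleftrightarrow> nattrans {m. 1 \<le> m} D F D' F' \<theta> \<and> \<theta> 0 = (\<lambda>i j. 0)"
  unfolding is_nattrans_def nattrans_def nmat_in_iff_mat_in nmul_eq_mat_mult by auto

lemma is_Smodhom_iff: "is_Smodhom d Q q n (N, \<rho>) (N', \<rho>') \<phi>
    \<longleftrightarrow> nattrans {n} (\<lambda>_. N) (\<lambda>_ _. \<rho>) (\<lambda>_. N')
    (\<lambda>_ _. \<rho>') (\<lambda>_. \<phi>)"
  unfolding is_Smodhom_def nattrans_def nmat_in_iff_mat_in nmul_eq_mat_mult by auto

lemma linfun_restrict: "linfun Ob D F \<Longrightarrow> n \<in> Ob
    \<Longrightarrow> linfun {n} (\<lambda>_. D n) (\<lambda>_ _. F n n)"
  unfolding linfun_def by auto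

lemma nattrans_restrict: "nattrans Ob D F D' F' \<theta> \<Longrightarrow> n \<in> Ob
    \<Longrightarrow> nattrans {n} (\<lambda>_. D n) (\<lambda>_ _. F n n) (\<lambda>_. D' n)
    (\<lambda>_ _. F' n n) (\<lambda>_. \<theta> n)"
  unfolding nattrans_def by auto

lemma n_obj: "n \<in> {m. 1 \<le> m}" using n_pos by simp

definition res_obj :: "'k Pobj \<Rightarrow> 'k Mobj" where
  "res_obj X = (fst X n, snd X n n)"

definition res_hom :: "'k Pobj \<Rightarrow> 'k Pobj \<Rightarrow> (nat \<Rightarrow> 'k nmat) \<Rightarrow> 'k
    nmat" where
  "res_hom X Y \<theta> = \<theta> n"

definition ind_obj :: "'k Mobj \<Rightarrow> 'k Pobj" where
  "ind_obj M = (img_dim (fst M) (snd M), ind_fun (fst M) (snd M))"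

definition ind_hom :: "'k Mobj \<Rightarrow> 'k Mobj \<Rightarrow> 'k nmat \<Rightarrow> nat \<Rightarrow> 'k
    nmat" where
  "ind_hom M M' \<phi> = ind_map (fst M) (snd M) (fst M') (snd M') \<phi>"

definition unit :: "'k Pobj \<Rightarrow> nat \<Rightarrow> 'k nmat" where
  "unit X = (\<lambda>m. if 1 \<le> m then unit_mat (fst X) (snd X) m else (\<lambda>i j. 0))"

definition unit_inv :: "'k Pobj \<Rightarrow> nat \<Rightarrow> 'k nmat" where
  "unit_inv X = (\<lambda>m. if 1 \<le> m then unit_inv_mat (fst X) (snd X) m else (\<lambda>i j. 0))"

text \<open>A module is a functor on the one-object subcategory {n}; the counit is its unit at n.\<close>

definition counit :: "'k Mobj \<Rightarrow> 'k nmat" where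
  "counit M = unit_mat (\<lambda>_. fst M) (\<lambda>_ _. snd M) n"

definition counit_inv :: "'k Mobj \<Rightarrow> 'k nmat" where
  "counit_inv M = unit_inv_mat (\<lambda>_. fst M) (\<lambda>_ _. snd M) n"

lemma Pcat_obj: "X \<in> obj (Pcat d Q q) \<longleftrightarrow> linfun {m. 1 \<le> m} (fst X) (snd X)"
  by (cases X) (simp add: Pcat_def is_linfunctor_iff)

lemma Pcat_hom: "\<theta> \<in> hom (Pcat d Q q) X Y
    \<longleftrightarrow> nattrans {m. 1 \<le> m} (fst X) (snd X) (fst Y) (snd Y) \<theta> 
      \<and> \<theta> 0 = (\<lambda>i j. 0)"
  by (cases X, cases Y) (simp add: Pcat_def is_nattrans_iff)

lemma Smod_cat_obj: "M \<in> obj (Smod_cat d Q q n)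
    \<longleftrightarrow> linfun {n} (\<lambda>_. fst M) (\<lambda>_ _. snd M)"
  by (cases M) (simp add: Smod_cat_def is_Smodule_iff)

lemma Smod_cat_hom: "\<phi> \<in> hom (Smod_cat d Q q n) M M'
    \<longleftrightarrow> nattrans {n} (\<lambda>_. fst M) (\<lambda>_ _. snd M) (\<lambda>_. fst M')
    (\<lambda>_ _. snd M') (\<lambda>_. \<phi>)"
  by (cases M, cases M') (simp add: Smod_cat_def is_Smodhom_iff)

lemma res_functor: "is_functor (Pcat d Q q) (Smod_cat d Q q n) res_obj res_hom"
  unfolding is_functor_def
proof (intro conjI ballI)
  fix X assume "X \<in> obj (Pcat d Q q)"
  thus "res_obj X \<in> obj (Smod_cat d Q q n)"
    by (simp add: Pcat_obj Smod_cat_obj res_obj_def linfun_restrict[OF _ n_obj])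
next
  fix X Y \<theta> assume "X \<in> obj (Pcat d Q q)" "Y \<in> obj (Pcat d Q q)" "\<theta> \<in> hom (Pcat d Q q) X Y"
  thus "res_hom X Y \<theta> \<in> hom (Smod_cat d Q q n) (res_obj X) (res_obj Y)"
    by (simp add: Pcat_hom Smod_cat_hom res_obj_def res_hom_def nattrans_restrict[OF _ n_obj])
next
  fix X Y Z :: "'k Pobj" and f g
  show "res_hom X Z (comp (Pcat d Q q) X Y Z g f)
      = comp (Smod_cat d Q q n) (res_obj X) (res_obj Y) (res_obj Z) (res_hom Y Z g) (res_hom X Y f)"
    by (simp add: Pcat_def Smod_cat_def res_obj_def res_hom_def)
next
  fix X
  show "res_hom X X (idn (Pcat d Q q) X) = idn (Smod_cat d Q q n) (res_obj X)"
    using n_pos by (simp add: Pcat_def Smod_cat_def res_obj_def res_hom_def)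
qed

lemma ind_hom_hom:
  assumes M: "M \<in> obj (Smod_cat d Q q n)" and M': "M' \<in> obj (Smod_cat d Q q n)"
    and ph: "\<phi> \<in> hom (Smod_cat d Q q n) M M'"
  shows "ind_hom M M' \<phi> \<in> hom (Pcat d Q q) (ind_obj M) (ind_obj M')"
  unfolding Pcat_hom
proof (intro conjI)
  have G: "linfun {n} (\<lambda>_. fst M) (\<lambda>_ _. snd M)" using M by (simp add: Smod_cat_obj)
  have G': "linfun {n} (\<lambda>_. fst M') (\<lambda>_ _. snd M')" using M' by (simp add: Smod_cat_obj)
  have th: "nattrans {n} (\<lambda>_. fst M) (\<lambda>_ _. snd M) (\<lambda>_. fst M') (\<lambda>_ _. snd M')
      (\<lambda>_. \<phi>)"
    using ph by (simp add: Smod_cat_hom)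
  show "ind_hom M M' \<phi> 0 = (\<lambda>i j. 0)" by (simp add: ind_hom_def ind_map_def)
  show "nattrans {m. 1 \<le> m} (fst (ind_obj M)) (snd (ind_obj M)) (fst (ind_obj M')) (snd (ind_obj M'))
      (ind_hom M M' \<phi>)"
    unfolding nattrans_def
    using ind_map_mat_in[OF G G' _ th] ind_map_natural[OF G G' _ th]
    by (simp add: ind_obj_def ind_hom_def)
qed

lemma ind_functor: "is_functor (Smod_cat d Q q n) (Pcat d Q q) ind_obj ind_hom"
  unfolding is_functor_def
proof (intro conjI ballI)
  fix M assume "M \<in> obj (Smod_cat d Q q n)"
  hence G: "linfun {n} (\<lambda>_. fst M) (\<lambda>_ _. snd M)" by (simp add: Smod_cat_obj)
  show "ind_obj M \<in> obj (Pcat d Q q)"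
    using linfun_ind_fun[OF G] by (simp add: Pcat_obj ind_obj_def)
next
  fix M M' \<phi> assume "M \<in> obj (Smod_cat d Q q n)" "M' \<in> obj (Smod_cat d Q q n)"
    "\<phi> \<in> hom (Smod_cat d Q q n) M M'"
  thus "ind_hom M M' \<phi> \<in> hom (Pcat d Q q) (ind_obj M) (ind_obj M')" by (rule ind_hom_hom)
next
  fix M M' M'' \<phi> \<psi> assume M: "M \<in> obj (Smod_cat d Q q n)" and M': "M' \<in> obj (Smod_cat d Q q n)"
    and M'': "M'' \<in> obj (Smod_cat d Q q n)"
    and ph: "\<phi> \<in> hom (Smod_cat d Q q n) M M'" and ps: "\<psi> \<in> hom (Smod_cat d Q q n) M' M''"
  have G: "linfun {n} (\<lambda>_. fst M) (\<lambda>_ _. snd M)"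
    and G': "linfun {n} (\<lambda>_. fst M') (\<lambda>_ _. snd M')"
    and G'': "linfun {n} (\<lambda>_. fst M'') (\<lambda>_ _. snd M'')"
    using M M' M'' by (simp_all add: Smod_cat_obj)
  have th: "nattrans {n} (\<lambda>_. fst M) (\<lambda>_ _. snd M) (\<lambda>_. fst M') (\<lambda>_ _. snd M')
      (\<lambda>_. \<phi>)"
    and th2: "nattrans {n} (\<lambda>_. fst M') (\<lambda>_ _. snd M') (\<lambda>_. fst M'')
        (\<lambda>_ _. snd M'') (\<lambda>_. \<psi>)"
    using ph ps by (simp_all add: Smod_cat_hom)
  show "ind_hom M M'' (comp (Smod_cat d Q q n) M M' M'' \<psi> \<phi>) =
      comp (Pcat d Q q) (ind_obj M) (ind_obj M') (ind_obj M'') (ind_hom M' M'' \<psi>) (ind_hom M M' \<phi>)"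
  proof (intro ext)
    fix m i j :: nat
    show "ind_hom M M'' (comp (Smod_cat d Q q n) M M' M'' \<psi> \<phi>) m i j =
        comp (Pcat d Q q) (ind_obj M) (ind_obj M') (ind_obj M'') (ind_hom M' M'' \<psi>) (ind_hom M M' \<phi>) m i j"
      using ind_map_comp[OF G G' G'' _ th th2, of m]
      by (cases "1 \<le> m") (simp_all add: Smod_cat_def Pcat_def ind_obj_def ind_hom_def nmul_eq_mat_mult
          ind_map_def mat_mult_def)
  qed
next
  fix M assume M: "M \<in> obj (Smod_cat d Q q n)"
  have G: "linfun {n} (\<lambda>_. fst M) (\<lambda>_ _. snd M)" using M by (simp add: Smod_cat_obj)
  show "ind_hom M M (idn (Smod_cat d Q q n) M) = idn (Pcat d Q q) (ind_obj M)"
  proof (intro ext)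
    fix m i j :: nat
    show "ind_hom M M (idn (Smod_cat d Q q n) M) m i j = idn (Pcat d Q q) (ind_obj M) m i j"
      using ind_map_id[OF G, of m]
      by (cases "1 \<le> m") (simp_all add: Smod_cat_def Pcat_def ind_obj_def ind_hom_def nid_eq_mat_id ind_map_def)
  qed
qed

lemma unit_hom:
  assumes G: "linfun {m. 1 \<le> m} (fst X) (snd X)"
  shows "unit X \<in> hom (Pcat d Q q) (ind_obj (res_obj X)) X"
  unfolding Pcat_hom nattrans_def
  using unit_mat_in[OF G n_obj] unit_natural[OF G n_obj]
  by (simp add: unit_def ind_obj_def res_obj_def)

lemma unit_inv_hom:
  assumes G: "linfun {m. 1 \<le> m} (fst X) (snd X)"
  shows "unit_inv X \<in> hom (Pcat d Q q) X (ind_obj (res_obj X))"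
  unfolding Pcat_hom nattrans_def
  using unit_inv_mat_in[OF G n_obj] unit_inv_natural[OF G n_obj]
  by (simp add: unit_inv_def ind_obj_def res_obj_def)

lemma unit_iso:
  assumes X: "X \<in> obj (Pcat d Q q)"
  shows "is_iso (Pcat d Q q) (ind_obj (res_obj X)) X (unit X)"
proof -
  have G: "linfun {m. 1 \<le> m} (fst X) (snd X)" using X by (simp add: Pcat_obj)
  have "comp (Pcat d Q q) (ind_obj (res_obj X)) X (ind_obj (res_obj X)) (unit_inv X) (unit X) m i j =
      idn (Pcat d Q q) (ind_obj (res_obj X)) m i j" for m i j
    using unit_inv_mult_unit[OF G n_obj, of m]
    by (cases "1 \<le> m") (simp_all add: Pcat_def unit_def unit_inv_def ind_obj_def res_obj_def
        nmul_eq_mat_mult nid_eq_mat_id mat_mult_def)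
  moreover have "comp (Pcat d Q q) X (ind_obj (res_obj X)) X (unit X) (unit_inv X) m i j =
      idn (Pcat d Q q) X m i j" for m i j
    using unit_mult_unit_inv[OF G n_obj, of m]
    by (cases "1 \<le> m") (simp_all add: Pcat_def unit_def unit_inv_def ind_obj_def res_obj_def
        nmul_eq_mat_mult nid_eq_mat_id mat_mult_def)
  ultimately show ?thesis
    unfolding is_iso_def using unit_hom[OF G] unit_inv_hom[OF G] by blast
qed

lemma unit_nat_iso: "is_nat_iso (Pcat d Q q) (Pcat d Q q) (\<lambda>a. ind_obj (res_obj a))
    (\<lambda>a b f. ind_hom (res_obj a) (res_obj b) (res_hom a b f)) (\<lambda>a. a) (\<lambda>a b f. f) unit"
  unfolding is_nat_iso_def
proof (intro conjI ballI)
  fix X assume "X \<in> obj (Pcat d Q q)"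
  thus "is_iso (Pcat d Q q) (ind_obj (res_obj X)) X (unit X)" by (rule unit_iso)
next
  fix X Y \<theta> assume X: "X \<in> obj (Pcat d Q q)" and Y: "Y \<in> obj (Pcat d Q q)"
    and th: "\<theta> \<in> hom (Pcat d Q q) X Y"
  have G: "linfun {m. 1 \<le> m} (fst X) (snd X)" and G': "linfun {m. 1 \<le> m} (fst Y) (snd Y)"
    using X Y by (simp_all add: Pcat_obj)
  have t: "nattrans {m. 1 \<le> m} (fst X) (snd X) (fst Y) (snd Y) \<theta>" and t0: "\<theta> 0 = (\<lambda>i j. 0)"
    using th by (simp_all add: Pcat_hom)
  show "comp (Pcat d Q q) (ind_obj (res_obj X)) (ind_obj (res_obj Y)) Y (unit Y)
      (ind_hom (res_obj X) (res_obj Y) (res_hom X Y \<theta>)) =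
        comp (Pcat d Q q) (ind_obj (res_obj X)) X Y \<theta> (unit X)"
  proof (intro ext)
    fix m i j :: nat
    show "comp (Pcat d Q q) (ind_obj (res_obj X)) (ind_obj (res_obj Y)) Y (unit Y)
        (ind_hom (res_obj X) (res_obj Y) (res_hom X Y \<theta>)) m i j =
        comp (Pcat d Q q) (ind_obj (res_obj X)) X Y \<theta> (unit X) m i j"
      using unit_natural_in_functor[OF G G' n_obj _ t, of m] t0
      by (cases "1 \<le> m") (simp_all add: Pcat_def unit_def ind_obj_def res_obj_def res_hom_def ind_hom_def
          nmul_eq_mat_mult mat_mult_def)
  qed
qed

lemma counit_nat_iso: "is_nat_iso (Smod_cat d Q q n) (Smod_cat d Q q n) (\<lambda>x. res_obj (ind_obj x))
    (\<lambda>x y g. res_hom (ind_obj x) (ind_obj y) (ind_hom x y g))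
    (\<lambda>x. x) (\<lambda>x y g. g) counit"
  unfolding is_nat_iso_def
proof (intro conjI ballI)
  have nn: "n \<in> {n}" by simp
  fix M assume M: "M \<in> obj (Smod_cat d Q q n)"
  have G: "linfun {n} (\<lambda>_. fst M) (\<lambda>_ _. snd M)" using M by (simp add: Smod_cat_obj)
  have u: "counit M \<in> hom (Smod_cat d Q q n) (res_obj (ind_obj M)) M"
    unfolding Smod_cat_hom nattrans_def
    using unit_mat_in[OF G nn nn n_pos] unit_natural[OF G nn nn nn n_pos n_pos]
    by (simp add: counit_def ind_obj_def res_obj_def)
  have v: "counit_inv M \<in> hom (Smod_cat d Q q n) M (res_obj (ind_obj M))"
    unfolding Smod_cat_hom nattrans_def
    using unit_inv_mat_in[OF G nn nn n_pos] unit_inv_natural[OF G nn nn nn n_pos n_pos]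
    by (simp add: counit_inv_def ind_obj_def res_obj_def)
  have c1: "comp (Smod_cat d Q q n) (res_obj (ind_obj M)) M (res_obj (ind_obj M)) (counit_inv M) (counit M)
      = idn (Smod_cat d Q q n) (res_obj (ind_obj M))"
    using unit_inv_mult_unit[OF G nn nn n_pos] by
        (simp add: Smod_cat_def counit_def counit_inv_def ind_obj_def res_obj_def nmul_eq_mat_mult nid_eq_mat_id)
  have c2: "comp (Smod_cat d Q q n) M (res_obj (ind_obj M)) M (counit M) (counit_inv M) = idn (Smod_cat d Q q n) M"
    using unit_mult_unit_inv[OF G nn nn n_pos] by
        (simp add: Smod_cat_def counit_def counit_inv_def ind_obj_def res_obj_def nmul_eq_mat_mult nid_eq_mat_id)
  show "is_iso (Smod_cat d Q q n) (res_obj (ind_obj M)) M (counit M)"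
    unfolding is_iso_def using u v c1 c2 by blast
next
  have nn: "n \<in> {n}" by simp
  fix M M' \<phi> assume M: "M \<in> obj (Smod_cat d Q q n)" and M': "M' \<in> obj (Smod_cat d Q q n)"
    and ph: "\<phi> \<in> hom (Smod_cat d Q q n) M M'"
  have G: "linfun {n} (\<lambda>_. fst M) (\<lambda>_ _. snd M)" using M by (simp add: Smod_cat_obj)
  have G': "linfun {n} (\<lambda>_. fst M') (\<lambda>_ _. snd M')" using M' by (simp add: Smod_cat_obj)
  have th: "nattrans {n} (\<lambda>_. fst M) (\<lambda>_ _. snd M) (\<lambda>_. fst M') (\<lambda>_ _. snd M')
      (\<lambda>_. \<phi>)" using ph by (simp add: Smod_cat_hom)
  show "comp (Smod_cat d Q q n) (res_obj (ind_obj M)) (res_obj (ind_obj M')) M' (counit M')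
      (res_hom (ind_obj M) (ind_obj M') (ind_hom M M' \<phi>)) =
        comp (Smod_cat d Q q n) (res_obj (ind_obj M)) M M' \<phi> (counit M)"
    using unit_natural_in_functor[OF G G' nn nn th n_pos]
    by (simp add: Smod_cat_def counit_def ind_obj_def res_obj_def res_hom_def ind_hom_def nmul_eq_mat_mult)
qed

theorem Pcat_equivalent_Smod_cat: "cat_equivalent (Pcat d Q q) (Smod_cat d Q q n)"
  unfolding cat_equivalent_def
  using res_functor ind_functor unit_nat_iso counit_nat_iso by blast

end

section \<open>Compressing indices: the splitting for n = 2r + 1\<close>

text \<open>compress S squeezes the absolute values in S onto 2, 4, ..., 2|S|, preserving order and sign;
  for |S| \<le> r its values are (doubled) indices of V_{2r+1}.\<close>

definition rank_in :: "int set \<Rightarrow> int \<Rightarrow> nat" where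
  "rank_in S v = card {s\<in>S. 0 < s \<and> s \<le> \<bar>v\<bar>}"

definition compress :: "int set \<Rightarrow> int \<Rightarrow> int" where
  "compress S v = sgn v * (2 * int (rank_in S v))"

lemma rank_in_abs [simp]: "rank_in S \<bar>v\<bar> = rank_in S v" "rank_in S (- v) = rank_in S v"
  by (simp_all add: rank_in_def)

lemma rank_in_strict_mono:
  assumes "finite S" "\<bar>v\<bar> < \<bar>w\<bar>" "\<bar>w\<bar> \<in> S"
  shows "rank_in S v < rank_in S w"
  unfolding rank_in_def
proof (rule psubset_card_mono)
  show "finite {s \<in> S. 0 < s \<and> s \<le> \<bar>w\<bar>}" using assms by simp
  have w0: "0 < \<bar>w\<bar>" using assms(2) by linarith
  have "\<bar>w\<bar> \<in> {s \<in> S. 0 < s \<and> s \<le> \<bar>w\<bar>}" using assms(3) w0 by simp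
  moreover have "\<bar>w\<bar> \<notin> {s \<in> S. 0 < s \<and> s \<le> \<bar>v\<bar>}" using assms(2) by simp
  moreover have "{s \<in> S. 0 < s \<and> s \<le> \<bar>v\<bar>} \<subseteq>
      {s \<in> S. 0 < s \<and> s \<le> \<bar>w\<bar>}"
    using assms(2) by (auto intro: order_trans)
  ultimately show "{s \<in> S. 0 < s \<and> s \<le> \<bar>v\<bar>} \<subset>
      {s \<in> S. 0 < s \<and> s \<le> \<bar>w\<bar>}" by blast
qed

lemma rank_in_pos:
  assumes "finite S" "\<bar>v\<bar> \<in> S" "v \<noteq> 0"
  shows "0 < rank_in S v"
proof -
  have "\<bar>v\<bar> \<in> {s\<in>S. 0 < s \<and> s \<le> \<bar>v\<bar>}" using assms by simp
  hence "{s\<in>S. 0 < s \<and> s \<le> \<bar>v\<bar>} \<noteq> {}" by blast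
  thus ?thesis using assms(1) by (simp add: rank_in_def card_gt_0_iff)
qed

lemma rank_in_le_card: "finite S \<Longrightarrow> rank_in S v \<le> card S"
  unfolding rank_in_def by (rule card_mono) (simp_all add: Collect_restrict)

lemma compress_minus: "compress S (-v) = - compress S v"
  by (simp add: compress_def sgn_minus)

lemma abs_compress: "\<bar>compress S v\<bar> = compress S \<bar>v\<bar>"
  by (simp add: compress_def abs_mult sgn_if)

lemma abs_compress_le: "finite S \<Longrightarrow> \<bar>compress S v\<bar> \<le> 2 * int (card S)"
  using rank_in_le_card[of S v] by (auto simp: compress_def abs_mult sgn_if)

lemma even_compress: "even (compress S v)"
  by (simp add: compress_def)

lemma compress_sign:
  assumes "finite S" "\<bar>v\<bar> \<in> S"
  shows "0 < compress S v \<longleftrightarrow> 0 < v" "compress S v = 0 \<longleftrightarrow> v = 0"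
    "compress S v < 0 \<longleftrightarrow> v < 0"
  using rank_in_pos[OF assms] by (auto simp: compress_def sgn_if zero_less_mult_iff mult_less_0_iff)

lemma compress_strict_mono:
  assumes S: "finite S" and v: "\<bar>v\<bar> \<in> S" and w: "\<bar>w\<bar> \<in> S"
    and vw: "v < w"
  shows "compress S v < compress S w"
proof (cases "0 \<le> v")
  case True
  hence "\<bar>v\<bar> < \<bar>w\<bar>" using vw by auto
  hence "rank_in S v < rank_in S w" using rank_in_strict_mono[OF S _ w] by simp
  moreover have "0 < w" using True vw by simp
  ultimately show ?thesis using True by (auto simp: compress_def sgn_if)
next
  case False
  show ?thesis
  proof (cases "0 \<le> w")
    case True
    have "compress S v < 0" using compress_sign(3)[OF S v] False by simp
    moreover have "0 \<le> compress S w" using compress_sign(1,2)[OF S w] True by linarith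
    ultimately show ?thesis by simp
  next
    case False
    hence "\<bar>w\<bar> < \<bar>v\<bar>" using vw \<open>\<not> 0 \<le> v\<close> by auto
    hence "rank_in S w < rank_in S v" using rank_in_strict_mono[OF S _ v] by simp
    thus ?thesis using False \<open>\<not> 0 \<le> v\<close> by (auto simp: compress_def sgn_if)
  qed
qed

lemma compress_less_iff:
  assumes S: "finite S" and v: "\<bar>v\<bar> \<in> S" and w: "\<bar>w\<bar> \<in> S"
    shows "compress S v < compress S w \<longleftrightarrow> v < w"
proof
  assume h: "compress S v < compress S w"
  show "v < w"
  proof (rule ccontr)
    assume "\<not> v < w" hence "w < v \<or> w = v" by auto
    thus False using compress_strict_mono[OF S w v] h by auto
  qed
next
  assume "v < w" thus "compress S v < compress S w" by (rule compress_strict_mono[OF S v w])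
qed

lemma compress_eq_iff:
  assumes S: "finite S" and v: "\<bar>v\<bar> \<in> S" and w: "\<bar>w\<bar> \<in> S"
  shows "compress S v = compress S w \<longleftrightarrow> v = w"
proof
  assume h: "compress S v = compress S w"
  show "v = w"
  proof (rule ccontr)
    assume "v \<noteq> w" hence "w < v \<or> v < w" by auto
    thus False using compress_strict_mono[OF S w v] compress_strict_mono[OF S v w] h by auto
  qed
qed simp

lemma KQ_compress:
  assumes S: "finite S" and a: "\<bar>a\<bar> \<in> S" and i: "\<bar>i\<bar> \<in> S"
  shows "KQ Q (compress S a) (compress S i) = KQ Q a i"
proof -
  have mi: "\<bar>-i\<bar> \<in> S" using i by simp
  have e1: "compress S a = - compress S i \<longleftrightarrow> a
      = - i" using compress_eq_iff[OF S a mi] by (simp add: compress_minus)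
  have e2: "compress S a = compress S i \<longleftrightarrow> a = i" by (rule compress_eq_iff[OF S a i])
  show ?thesis unfolding KQ_def
    by (simp only: e1 e2 compress_sign[OF S a] compress_sign[OF S i])
qed

lemma Rq_compress:
  assumes S: "finite S" and a: "\<bar>a\<bar> \<in> S" and b: "\<bar>b\<bar> \<in> S" and i:
    "\<bar>i\<bar> \<in> S" and j: "\<bar>j\<bar> \<in> S"
  shows "Rq q (compress S a) (compress S b) (compress S i) (compress S j) = Rq q a b i j"
  unfolding Rq_def
  by (simp only: compress_eq_iff[OF S a i] compress_eq_iff[OF S a j] compress_eq_iff[OF S b i]
      compress_eq_iff[OF S b j]
      compress_eq_iff[OF S i j] compress_less_iff[OF S i j])



lemma abs_in_idx_iff: "v \<in> idx m \<longleftrightarrow> \<bar>v\<bar> \<in> idx m"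
proof -
  have "even (v + int m - 1) \<longleftrightarrow> even (\<bar>v\<bar> + int m - 1)"
  proof (cases "0 \<le> v")
    case True thus ?thesis by simp
  next
    case False
    hence "\<bar>v\<bar> + int m - 1 = (v + int m - 1) + 2 * (- v)" by simp
    thus ?thesis by (metis dvd_add_left_iff dvd_triv_left)
  qed
  thus ?thesis by (simp add: idx_def)
qed

lemma map_compress_in_tup:
  assumes S: "finite S" and n: "n = 2 * r + 1" and c: "card S \<le> r" and y: "length y = d"
  shows "map (compress S) y \<in> tup d n"
proof -
  have "compress S v \<in> idx n" for v
  proof -
    have "\<bar>compress S v\<bar> \<le> 2 * int r" using abs_compress_le[OF S, of v] c by linarith
    moreover have "even (compress S v + int n - 1)" using even_compress[of S v] n by simp
    ultimately show ?thesis using n by (simp add: idx_def)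
  qed
  thus ?thesis using y by (auto simp: tup_def)
qed

lemma Rq_nonzero: "Rq q a b i j \<noteq> 0 \<Longrightarrow> (a = j \<and> b = i) \<or> (a = i \<and> b = j)"
  by (auto simp: Rq_def split: if_splits)

lemma KQ_nonzero: "KQ Q a i \<noteq> 0 \<Longrightarrow> a = i \<or> a = - i"
  by (auto simp: KQ_def split: if_splits)

lemma Tgen_nonzero_tup: "Tgen d Q q m i y x \<noteq> 0 \<Longrightarrow> y \<in> tup d m \<and> x \<in> tup d m"
  by (auto simp: Tgen_def split: if_splits)

lemma set_subset_of_adjacent_swap:
  assumes "length y = length x" "Suc p < length x"
    and "\<forall>k<length x. k \<noteq> p \<and> k \<noteq> Suc p \<longrightarrow> y ! k = x ! k"
    and "(y ! p = x ! Suc p \<and> y ! Suc p = x ! p) \<or> (y ! p = x ! p \<and> y ! Suc p = x ! Suc p)"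
  shows "set y \<subseteq> set x"
proof
  fix e assume "e \<in> set y"
  then obtain k where k: "k < length y" "e = y ! k" by (auto simp: in_set_conv_nth)
  have "k = p \<or> k = Suc p \<or> y ! k = x ! k" using assms(1,3) k(1) by auto
  thus "e \<in> set x" using assms(1,2,4) k by (auto intro: nth_mem)
qed

lemma Tgen_nonzero_abs_set:
  assumes i: "i < d" and nz: "Tgen d Q q m i y x \<noteq> 0"
  shows "abs ` set y = abs ` set x"
proof -
  have y: "y \<in> tup d m" and x: "x \<in> tup d m" using Tgen_nonzero_tup[OF nz] by auto
  have ly: "length y = d" and lx: "length x = d" using x y by (auto simp: tup_def)
  show ?thesis
  proof (cases "i = 0")
    case True
    with nz y x have tl: "tl y = tl x" and k: "KQ Q (hd y) (hd x) \<noteq> 0"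
      by (auto simp: Tgen_def split: if_splits)
    have "y \<noteq> []" "x \<noteq> []" using ly lx i by auto
    hence "y = hd y # tl y" "x = hd x # tl x" by auto
    moreover have "\<bar>hd y\<bar> = \<bar>hd x\<bar>" using KQ_nonzero[OF k] by auto
    ultimately show ?thesis using tl by (metis image_insert list.simps(15))
  next
    case False
    then obtain p where p: "i = Suc p" by (cases i) auto
    with nz y x have others: "\<forall>k<d. k \<noteq> p \<and> k \<noteq> Suc p \<longrightarrow> y ! k = x ! k"
      and r: "Rq q (y ! p) (y ! Suc p) (x ! p) (x ! Suc p) \<noteq> 0"
      by (auto simp: Tgen_def split: if_splits)
    have "(y ! p = x ! Suc p \<and> y ! Suc p = x ! p) \<or> (y ! p = x ! p \<and> y ! Suc p = x ! Suc p)"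
      using Rq_nonzero[OF r] by auto
    hence "set y \<subseteq> set x" "set x \<subseteq> set y"
      using set_subset_of_adjacent_swap[of y x p] set_subset_of_adjacent_swap[of x y p] others i p ly lx
      by auto
    thus ?thesis by simp
  qed
qed

lemma inj_on_compress: "finite S \<Longrightarrow> inj_on (compress S) {v. \<bar>v\<bar> \<in> S}"
  by (auto simp: inj_on_def compress_eq_iff)

lemma Tgen_compress:
  assumes S: "finite S" and n: "n = 2 * r + 1" and c: "card S \<le> r" and i: "i < d"
    and y: "y \<in> tup d m" and x: "x \<in> tup d m" and yS: "abs ` set y \<subseteq> S" 
    and xS: "abs ` set x \<subseteq> S"
  shows "Tgen d Q q n i (map (compress S) y) (map (compress S) x) = Tgen d Q q m i y x"
proof -
  have ly: "length y = d" and lx: "length x = d" using x y by (auto simp: tup_def)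
  have ty: "map (compress S) y \<in> tup d n" and tx: "map (compress S) x \<in> tup d n"
    using map_compress_in_tup[OF S n c ly] map_compress_in_tup[OF S n c lx] by auto
  have inj: "inj_on (compress S) (set y \<union> set x)"
    using yS xS by (intro inj_on_subset[OF inj_on_compress[OF S]]) auto
  show ?thesis
  proof (cases "i = 0")
    case True
    have ne: "y \<noteq> []" "x \<noteq> []" using ly lx i by auto
    have hy: "\<bar>hd y\<bar> \<in> S" "\<bar>hd x\<bar> \<in> S" using yS xS ne by auto
    have inj2: "inj_on (compress S) (set (tl y) \<union> set (tl x))"
      using ne by (intro inj_on_subset[OF inj]) (auto dest: list.set_sel(2))
    have "map (compress S) (tl y) = map (compress S) (tl x) \<longleftrightarrow> tl y = tl x"
      using inj_on_map_eq_map[OF inj2] .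
    thus ?thesis using True ty tx y x ne
      by (simp add: Tgen_def map_tl[symmetric] hd_map KQ_compress[OF S hy, of Q])
  next
    case False
    have e: "\<And>p. p < d \<Longrightarrow> \<bar>y ! p\<bar> \<in> S
        \<and> \<bar>x ! p\<bar> \<in> S" using yS xS ly lx by auto
    have i1: "i - 1 < d" using i by simp
    have eq: "(\<forall>p<d. p \<noteq> i - 1 \<and> p \<noteq> i \<longrightarrow> map (compress S) y ! p
        = map (compress S) x ! p) \<longleftrightarrow>
              (\<forall>p<d. p \<noteq> i - 1 \<and> p \<noteq> i \<longrightarrow> y ! p = x ! p)"
      using e ly lx by (auto simp: compress_eq_iff[OF S])
    have rq: "Rq q (compress S (y ! (i - 1))) (compress S (y ! i)) (compress S (x ! (i - 1))) (compress S (x ! i)) =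
              Rq q (y ! (i - 1)) (y ! i) (x ! (i - 1)) (x ! i)"
      using e[OF i] e[OF i1] by (intro Rq_compress[OF S]) auto
    show ?thesis using False ty tx y x eq rq i i1 ly lx
      by (simp add: Tgen_def) blast
  qed
qed



definition abs_idx :: "nat \<Rightarrow> int set" where
  "abs_idx m = abs ` idx m"

definition abs_patterns :: "nat \<Rightarrow> nat \<Rightarrow> int set set" where
  "abs_patterns d m = {S. S \<subseteq> abs_idx m \<and> card S \<le> d}"

definition tup_with_abs :: "nat \<Rightarrow> nat \<Rightarrow> int set \<Rightarrow> int list set" where
  "tup_with_abs d m S = {y \<in> tup d m. abs ` set y = S}"

definition compress_proj :: "nat \<Rightarrow> nat \<Rightarrow> int set \<Rightarrow> 'k::field tmat" where
  "compress_proj d m S = (\<lambda>x' y. if y \<in> tup_with_abs d m S \<and> x' = map (compress S) y then 1 else 0)"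

definition compress_incl :: "nat \<Rightarrow> nat \<Rightarrow> int set \<Rightarrow> 'k::field tmat" where
  "compress_incl d m S = (\<lambda>y x'. if y \<in> tup_with_abs d m S \<and> x' = map (compress S) y then 1 else 0)"

lemma finite_abs_idx: "finite (abs_idx m)" by (simp add: abs_idx_def finite_idx)

lemma finite_abs_patterns: "finite (abs_patterns d m)"
proof -
  have "abs_patterns d m \<subseteq> Pow (abs_idx m)" by (auto simp: abs_patterns_def)
  thus ?thesis using finite_abs_idx by (rule finite_subset[OF _ finite_Pow_iff[THEN iffD2]])
qed

lemma abs_patterns_props:
  assumes "S \<in> abs_patterns d m"
  shows "finite S" "card S \<le> d" "\<And>s. s \<in> S \<Longrightarrow> 0 \<le> s" "S \<subseteq> abs_idx m"
proof -
  have S: "S \<subseteq> abs_idx m" "card S \<le> d" using assms by (auto simp: abs_patterns_def)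
  show "finite S" by (rule finite_subset[OF S(1) finite_abs_idx])
  show "card S \<le> d" by (rule S(2))
  show "S \<subseteq> abs_idx m" by (rule S(1))
  fix s assume "s \<in> S" thus "0 \<le> s" using S(1) by (auto simp: abs_idx_def)
qed

lemma abs_set_map_compress: "abs ` set (map (compress S) y) = compress S ` (abs ` set y)"
  by (auto simp: image_image abs_compress)

lemma abs_idx_in_idx:
  assumes "s \<in> abs_idx m" "\<bar>v\<bar> = s"
  shows "v \<in> idx m"
proof -
  obtain u where u: "u \<in> idx m" "s = \<bar>u\<bar>" using assms(1) by (auto simp: abs_idx_def)
  have "\<bar>u\<bar> \<in> idx m" using u(1) abs_in_idx_iff[of u m] by simp
  hence "\<bar>v\<bar> \<in> idx m" using u(2) assms(2) by simp
  thus ?thesis using abs_in_idx_iff[of v m] by simp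
qed

lemma compress_lift:
  assumes S: "finite S" "\<And>s. s \<in> S \<Longrightarrow> 0 \<le> s" and e: "\<bar>e\<bar> \<in> compress S ` S"
  shows "\<exists>v. compress S v = e \<and> \<bar>v\<bar> \<in> S"
proof -
  obtain s where s: "s \<in> S" "compress S s = \<bar>e\<bar>" using e by auto
  have abs_s: "\<bar>s\<bar> \<in> S" using S(2)[OF s(1)] s(1) by simp
  show ?thesis
  proof (cases "e < 0")
    case True thus ?thesis using s abs_s by (intro exI[of _ "- s"]) (simp add: compress_minus)
  next
    case False thus ?thesis using s abs_s by (intro exI[of _ s]) simp
  qed
qed

lemma image_map_compress:
  assumes S: "S \<in> abs_patterns d m" and n: "n = 2 * r + 1" and dr: "d \<le> r"
  shows "map (compress S) ` tup_with_abs d m S = {w \<in> tup d n. abs ` set w = compress S ` S}"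
proof -
  note sf = abs_patterns_props[OF S]
  have c: "card S \<le> r" using sf(2) dr by simp
  show ?thesis
  proof
    show "map (compress S) ` tup_with_abs d m S \<subseteq> {w \<in> tup d n. abs ` set w = compress S ` S}"
    proof
      fix w assume "w \<in> map (compress S) ` tup_with_abs d m S"
      then obtain y where y: "y \<in> tup_with_abs d m S" "w = map (compress S) y" by blast
      have ly: "length y = d" and ay: "abs ` set y = S" using y(1) by (auto simp: tup_with_abs_def tup_def)
      have "w \<in> tup d n" using map_compress_in_tup[OF sf(1) n c ly] y(2) by simp
      moreover have "abs ` set w = compress S ` S" using y(2) ay abs_set_map_compress[of S y] by simp
      ultimately show "w \<in> {w \<in> tup d n. abs ` set w = compress S ` S}" by simp
    qed
  next
    show "{w \<in> tup d n. abs ` set w = compress S ` S} \<subseteq> map (compress S) ` tup_with_abs d m S"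
    proof
      fix w assume "w \<in> {w \<in> tup d n. abs ` set w = compress S ` S}"
      hence w: "w \<in> tup d n" and aw: "abs ` set w = compress S ` S" by auto
      have "\<forall>e\<in>set w. \<exists>v. compress S v = e \<and> \<bar>v\<bar> \<in> S"
        using compress_lift[OF sf(1) sf(3)] aw by blast
      then obtain g where ge: "\<And>e. e \<in> set w \<Longrightarrow> compress S (g e) = e
          \<and> \<bar>g e\<bar> \<in> S" by metis
      define y where "y = map g w"
      have my: "map (compress S) y = w" unfolding y_def map_map by (rule map_idI) (simp add: ge)
      have yS: "abs ` set y \<subseteq> S" using ge by (auto simp: y_def)
      have ty: "y \<in> tup d m"
      proof -
        have "\<And>v. v \<in> set y \<Longrightarrow> v \<in> idx m"
          using yS sf(4) abs_idx_in_idx by blast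
        thus ?thesis using w by (auto simp: tup_def y_def)
      qed
      have "compress S ` (abs ` set y) = compress S ` S" using aw my abs_set_map_compress[of S y] by simp
      moreover have "inj_on (compress S) S" using inj_on_compress[OF sf(1)] by (rule inj_on_subset)
          (use sf(3) in force)
      ultimately have "abs ` set y = S" using yS by (simp add: inj_on_image_eq_iff)
      hence "y \<in> tup_with_abs d m S" using ty by (simp add: tup_with_abs_def)
      thus "w \<in> map (compress S) ` tup_with_abs d m S" using my by blast
    qed
  qed
qed

lemma inj_on_map_compress:
  assumes S: "finite S"
  shows "inj_on (map (compress S)) {y. abs ` set y \<subseteq> S}"
proof (rule inj_onI)
  fix y z assume y: "y \<in> {y. abs ` set y \<subseteq> S}" and z: "z \<in> {y. abs ` set y \<subseteq> S}"
    and e: "map (compress S) y = map (compress S) z"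
  have "inj_on (compress S) (set y \<union> set z)"
    using y z by (intro inj_on_subset[OF inj_on_compress[OF S]]) auto
  thus "y = z" using e inj_on_map_eq_map by blast
qed

lemma compress_proj_incl_CHom:
  assumes S: "S \<in> abs_patterns d m" and n: "n = 2 * r + 1" and dr: "d \<le> r"
  shows "compress_proj d m S \<in> CHom d Q q m n" "compress_incl d m S \<in> CHom d Q q n m"
proof -
  note sf = abs_patterns_props[OF S]
  have c: "card S \<le> r" using sf(2) dr by simp
  let ?A = "tup_with_abs d m S" and ?phi = "map (compress S)"
  have A: "?A \<subseteq> tup d m" by (auto simp: tup_with_abs_def)
  have ic_char: "?phi ` ?A = {w \<in> tup d n. abs ` set w = compress S ` S}" by (rule image_map_compress[OF S n dr])
  have phA: "?phi ` ?A \<subseteq> tup d n" using ic_char by auto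
  have inj: "inj_on ?phi ?A"
    by (rule inj_on_subset[OF inj_on_map_compress[OF sf(1)]]) (auto simp: tup_with_abs_def)
  have pcd: "compress_proj d m S = (\<lambda>x' y. if y \<in> ?A \<and> x' = ?phi y then 1 else 0)" by
      (simp add: compress_proj_def fun_eq_iff)
  have icd: "compress_incl d m S = (\<lambda>y x'. if y \<in> ?A \<and> x' = ?phi y then 1 else 0)" by
      (simp add: compress_incl_def fun_eq_iff)
  have A_inv: "Tgen d Q q m i y z \<noteq> 0
      \<Longrightarrow> (y \<in> ?A \<longleftrightarrow> z \<in> ?A)" if i: "i < d" for i y z
    using Tgen_nonzero_tup[of d Q q m i y z] Tgen_nonzero_abs_set[OF i, of Q q m y z] by (auto simp: tup_with_abs_def)
  have img_inv: "Tgen d Q q n i w w' \<noteq> 0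
      \<Longrightarrow> (w \<in> ?phi ` ?A \<longleftrightarrow> w' \<in> ?phi ` ?A)" if i: "i < d" for i w w'
    unfolding ic_char using Tgen_nonzero_tup[of d Q q n i w w'] Tgen_nonzero_abs_set[OF i, of Q q n w w'] by auto
  have transport: "y \<in> ?A \<Longrightarrow> z \<in> ?A \<Longrightarrow> Tgen d Q q n i (?phi y) (?phi z)
      = Tgen d Q q m i y z" if i: "i < d" for i y z
    by (rule Tgen_compress[OF sf(1) n c i]) (auto simp: tup_with_abs_def)
  show "compress_proj d m S \<in> CHom d Q q m n"
    unfolding CHom_iff
  proof (intro conjI allI impI)
    show "mat_in (tup d n) (tup d m) (compress_proj d m S)"
      using A phA by (auto simp: pcd mat_in_def split: if_splits)
    fix i assume i: "i < d"
    show "mat_mult (tup d m) (compress_proj d m S) (Tgen d Q q m i)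
        = mat_mult (tup d n) (Tgen d Q q n i) (compress_proj d m S)"
      unfolding pcd by (rule relabel_intertwines[where ?T1.0="Tgen d Q q m i" and ?T2.0="Tgen d Q q n i", OF
          finite_tup[of d m] finite_tup[of d n] A phA inj A_inv[OF i] img_inv[OF i] transport[OF i]])
  qed
  show "compress_incl d m S \<in> CHom d Q q n m"
    unfolding CHom_iff
  proof (intro conjI allI impI)
    show "mat_in (tup d m) (tup d n) (compress_incl d m S)"
      using A phA by (auto simp: icd mat_in_def split: if_splits)
    fix i assume i: "i < d"
    show "mat_mult (tup d n) (compress_incl d m S) (Tgen d Q q n i)
        = mat_mult (tup d m) (Tgen d Q q m i) (compress_incl d m S)"
      unfolding icd by (rule relabel_transpose_intertwines[where ?T1.0="Tgen d Q q m i" and ?T2.0="Tgen d Q q n i",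
          OF finite_tup[of d m] finite_tup[of d n] A phA inj A_inv[OF i] img_inv[OF i] transport[OF i]])
  qed
qed

lemma compress_incl_mult_proj:
  assumes S: "S \<in> abs_patterns d m" and n: "n = 2 * r + 1" and dr: "d \<le> r"
  shows "mat_mult (tup d n) (compress_incl d m S) (compress_proj d m S) y z =
    (if y \<in> tup_with_abs d m S \<and> z = y then 1 else 0)"
proof -
  note sf = abs_patterns_props[OF S]
  have c: "card S \<le> r" using sf(2) dr by simp
  have "mat_mult (tup d n) (compress_incl d m S) (compress_proj d m S) y z =
    (\<Sum>x'\<in>tup d n. if x' = map (compress S) y then
        (if y \<in> tup_with_abs d m S \<and> z \<in> tup_with_abs d m S
       \<and> map (compress S) z = map (compress S) y then 1 else 0) else 0)"
    unfolding mat_mult_apply compress_incl_def compress_proj_def by (rule sum.cong) auto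
  also have "\<dots> = (if y \<in> tup_with_abs d m S \<and> z \<in> tup_with_abs d m S
      \<and> map (compress S) z = map (compress S) y then 1 else 0)"
  proof (cases "y \<in> tup_with_abs d m S")
    case True
    hence "map (compress S) y \<in> tup d n"
      using map_compress_in_tup[OF sf(1) n c] by (auto simp: tup_with_abs_def tup_def)
    thus ?thesis by (simp add: sum.delta' finite_tup)
  qed simp
  also have "\<dots> = (if y \<in> tup_with_abs d m S \<and> z = y then 1 else 0)"
    using inj_on_map_compress[OF sf(1)] by (auto simp: tup_with_abs_def inj_on_def)
  finally show ?thesis .
qed

lemma abs_set_in_abs_patterns: "y \<in> tup d m \<Longrightarrow> abs ` set y \<in> abs_patterns d m"
  using card_image_le[of "set y" abs] card_length[of y]
  by (auto simp: tup_def abs_idx_def abs_patterns_def)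

lemma sum_compress_incl_proj:
  assumes n: "n = 2 * r + 1" and dr: "d \<le> r"
  shows "(\<lambda>x y. \<Sum>S\<in>abs_patterns d m. mat_mult (tup d n) (compress_incl d m S)
      (compress_proj d m S) x y) = tid d m"
proof (intro ext)
  fix y z
  have "(\<Sum>S\<in>abs_patterns d m. mat_mult (tup d n) (compress_incl d m S) (compress_proj d m S) y z) =
      (\<Sum>S\<in>abs_patterns d m. if abs ` set y = S then (if y \<in> tup d m \<and> z = y then 1 else 0) else 0)"
    by (rule sum.cong) (auto simp: compress_incl_mult_proj[OF _ n dr] tup_with_abs_def)
  also have "\<dots> = tid d m y z"
    using abs_set_in_abs_patterns[of y d m] by (auto simp: sum.delta finite_abs_patterns tid_def)
  finally show "(\<Sum>S\<in>abs_patterns d m. mat_mult (tup d n) (compress_incl d m S) (compress_proj d m S)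
      y z) = tid d m y z" .
qed

lemma generator_splitting_compress:
  assumes "n = 2 * r + 1" and "d \<le> r"
  shows "generator_splitting d Q q n (abs_patterns d) (compress_proj d) (compress_incl d)"
proof
  show "1 \<le> n" using assms(1) by simp
  show "finite (abs_patterns d m)" for m by (rule finite_abs_patterns)
  show "compress_proj d m S \<in> CHom d Q q m n" if "S \<in> abs_patterns d m" for m S
    by (rule compress_proj_incl_CHom(1)[OF that assms])
  show "compress_incl d m S \<in> CHom d Q q n m" if "S \<in> abs_patterns d m" for m S
    by (rule compress_proj_incl_CHom(2)[OF that assms])
  show "(\<lambda>x y. \<Sum>S\<in>abs_patterns d m. mat_mult (tup d n) (compress_incl d m S)
      (compress_proj d m S) x y) = tid d m"
    for m by (rule sum_compress_incl_proj[OF assms])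
qed

theorem theorem3p10:
  fixes Q q :: "'k::field" and d r n :: nat
  assumes "Q \<noteq> 0" and "q \<noteq> 0" and "1 \<le> d" and "n = 2 * r + 1" and "d \<le> r"
  shows "cat_equivalent (Pcat d Q q) (Smod_cat d Q q n)"
proof -
  interpret generator_splitting d Q q n "abs_patterns d" "compress_proj d" "compress_incl d"
    using generator_splitting_compress[OF assms(4,5)] .
  show ?thesis by (rule Pcat_equivalent_Smod_cat)
qed

end
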